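(* Consider a Lindblad system on $\mathbb{C}^n$ in which, in an orthonormal basis $\{|j\rangle\}_{j=1}^n$, the Hamiltonian $H=\sum_j H_j|j\rangle\langle j|$ is diagonal and each Lindblad operator is $L_\alpha = A_\alpha D_\alpha$ ($\alpha=1,\dots,N$), with $A_\alpha$ the permutation matrix of a permutation $\sigma_\alpha$ (so $L_\alpha|j\rangle = D_{\alpha,j}|\sigma_\alpha(j)\rangle$) and $D_\alpha=\mathrm{diag}(D_{\alpha,1},\dots,D_{\alpha,n})$, where the decomposition is chosen so that each cycle of $\sigma_\alpha$ contains at most one index $j$ with $D_{\alpha,j}=0$. Let $N_B$ be the union of the vertex sets of the basins of $G_\Omega$ (for the diagonal projectors $|j\rangle\langle j|$), let $P_\eta$ be the diagonal projector onto the span of $\{|j\rangle: j\in N_\eta\}$ for each basin vertex set $N_\eta$, and $P_B=\sum_\eta P_\eta$. Then there is a hidden enclosure if and only if there is a uniform equivalence relation $\sim$ on a subset $N_\sim\subseteq\{1,\dots,n\}$ with $\nu_\sim\ge2$ such that: (i) (Hamiltonian symmetry) $j\sim k \implies H_j = H_k$; (ii) (Dissipation symmetry) for every $\alpha$, $j\sim k\implies |D_{\alpha,j}|=|D_{\alpha,k}|$; and, for every $\alpha$, $j\sim k\implies \sigma_\alpha(j)\sim\sigma_\alpha(k)$ whenever $\sigma_\alpha(j),\sigma_\alpha(k)\in N_B$; (iii) (Dissipation resonance) the induced coherence graph $G_\sim$ has a connected component that is resonant.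
   Context: $G_\Omega$: directed graph on $\{1,\dots,n\}$ with an edge from $k$ to $j$ of weight $w_{jk}=\sum_{\alpha:\sigma_\alpha(k)=j}|D_{\alpha,k}|^2$ whenever $j\ne k$ and $w_{jk}\ne0$; a basin is a strongly connected component with no edge leaving it. A hidden enclosure is the range of an orthogonal projector $P$ on $\mathbb{C}^n$ whose range is contained in the range of $P_B$, which commutes with $P_BHP_B$ and with $P_BL_\alpha P_B$ for all $\alpha$, and which is neither one of the $P_\eta$ nor a sum of such projectors. An equivalence relation $\sim$ on $N_\sim$ is uniform if all its equivalence classes have the same number $\nu_\sim$ of elements. The induced coherence graph $G_\sim$ has vertex set $N_C=\{(j,k): j,k\in N_\sim,\ j\sim k,\ j\ne k\}$; for each $\alpha$ and each pair of vertices with $\sigma_\alpha(j_1)=j_2$, $\sigma_\alpha(k_1)=k_2$, $D_{\alpha,j_1}\ne0$, $D_{\alpha,k_1}\ne0$, there is a directed edge $(j_1,k_1)\to_\alpha(j_2,k_2)$ (self-edges and multiple edges allowed) with $U(1)$-valued weight $w(j_1,k_1,j_2,k_2,\alpha)=\frac{D_{\alpha,j_1}\overline{D_{\alpha,k_1}}}{|D_{\alpha,j_1}||D_{\alpha,k_1}|}$. A connected component of $G_\sim$ with vertex set $C$ is resonant if there is a function $f_C: C\times C\to U(1)$ that is transitive, i.e. $f_C(x,y)f_C(y,z)=f_C(x,z)$ for all $x,y,z\in C$, and matches every edge weight, i.e. $f_C((j_1,k_1),(j_2,k_2)) = w(j_1,k_1,j_2,k_2,\alpha)$ for every edge $(j_1,k_1)\to_\alpha(j_2,k_2)$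 in the component, regardless of $\alpha$. *)

theory Defs
  imports "HOL-Analysis.Analysis"
begin

text \<open>States are indexed by a finite type 'n (standard orthonormal basis of C^n);
Lindblad operators are indexed by alpha < N.\<close>

definition diag_mat :: "('n::finite \<Rightarrow> complex) \<Rightarrow> complex^'n^'n" where
  "diag_mat d = (\<chi> i j. if i = j then d i else 0)"

text \<open>L = A D with A the permutation matrix of s: L e_j = d j e_(s j).\<close>
definition lindblad_op :: "('n::finite \<Rightarrow> 'n) \<Rightarrow> ('n \<Rightarrow> complex) \<Rightarrow> complex^'n^'n" where
  "lindblad_op s d = (\<chi> i j. if i = s j then d j else 0)"

definition cadjoint :: "complex^'n::finite^'m::finite \<Rightarrow> complex^'m^'n" where
  "cadjoint A = (\<chi> i j. cnj (A $ j $ i))"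

definition orth_projector :: "complex^'n::finite^'n \<Rightarrow> bool" where
  "orth_projector P \<longleftrightarrow> P ** P = P \<and> cadjoint P = P"

definition mat_range :: "complex^'n::finite^'m::finite \<Rightarrow> (complex^'m) set" where
  "mat_range A = range (\<lambda>x. A *v x)"

definition mat_commute :: "complex^'n::finite^'n \<Rightarrow> complex^'n^'n \<Rightarrow> bool" where
  "mat_commute A B \<longleftrightarrow> A ** B = B ** A"

definition omega_weight :: "nat \<Rightarrow> (nat \<Rightarrow> 'n \<Rightarrow> 'n) \<Rightarrow> (nat \<Rightarrow> 'n \<Rightarrow> complex) \<Rightarrow> 'n \<Rightarrow> 'n \<Rightarrow> real" where
  "omega_weight N \<sigma> D j k = (\<Sum>\<alpha>\<in>{\<alpha>. \<alpha> < N \<and> \<sigma> \<alpha> k = j}. (cmod (D \<alpha> k))^2)"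

text \<open>Edge from k to j.\<close>
definition omega_edge :: "nat \<Rightarrow> (nat \<Rightarrow> 'n \<Rightarrow> 'n) \<Rightarrow> (nat \<Rightarrow> 'n \<Rightarrow> complex) \<Rightarrow> 'n \<Rightarrow> 'n \<Rightarrow> bool" where
  "omega_edge N \<sigma> D k j \<longleftrightarrow> j \<noteq> k \<and> omega_weight N \<sigma> D j k \<noteq> 0"

definition omega_scc :: "nat \<Rightarrow> (nat \<Rightarrow> 'n \<Rightarrow> 'n) \<Rightarrow> (nat \<Rightarrow> 'n \<Rightarrow> complex) \<Rightarrow> 'n \<Rightarrow> 'n set" where
  "omega_scc N \<sigma> D k = {j. (omega_edge N \<sigma> D)\<^sup>*\<^sup>* k j \<and> (omega_edge N \<sigma> D)\<^sup>*\<^sup>* j k}"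

definition is_basin :: "nat \<Rightarrow> (nat \<Rightarrow> 'n \<Rightarrow> 'n) \<Rightarrow> (nat \<Rightarrow> 'n \<Rightarrow> complex) \<Rightarrow> 'n set \<Rightarrow> bool" where
  "is_basin N \<sigma> D C \<longleftrightarrow> (\<exists>k. C = omega_scc N \<sigma> D k) \<and>
      (\<forall>x\<in>C. \<forall>y. omega_edge N \<sigma> D x y \<longrightarrow> y \<in> C)"

definition basins :: "nat \<Rightarrow> (nat \<Rightarrow> 'n \<Rightarrow> 'n) \<Rightarrow> (nat \<Rightarrow> 'n \<Rightarrow> complex) \<Rightarrow> 'n set set" where
  "basins N \<sigma> D = {C. is_basin N \<sigma> D C}"

definition basin_union :: "nat \<Rightarrow> (nat \<Rightarrow> 'n \<Rightarrow> 'n) \<Rightarrow> (nat \<Rightarrow> 'n \<Rightarrow> complex) \<Rightarrow> 'n set" where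
  "basin_union N \<sigma> D = \<Union> (basins N \<sigma> D)"

definition diag_proj :: "'n::finite set \<Rightarrow> complex^'n^'n" where
  "diag_proj C = (\<chi> i j. if i = j \<and> i \<in> C then 1 else 0)"

definition basin_proj :: "nat \<Rightarrow> (nat \<Rightarrow> 'n::finite \<Rightarrow> 'n) \<Rightarrow> (nat \<Rightarrow> 'n \<Rightarrow> complex) \<Rightarrow> complex^'n^'n" where
  "basin_proj N \<sigma> D = (\<Sum>C\<in>basins N \<sigma> D. diag_proj C)"

text \<open>Hidden enclosure. "Neither one of the P_eta nor a sum of such projectors" is read as:
P is not equal to the sum of P_eta over any set of basins (the empty sum excludes P = 0).\<close>
definition has_hidden_enclosure ::
  "nat \<Rightarrow> (nat \<Rightarrow> 'n::finite \<Rightarrow> 'n) \<Rightarrow> (nat \<Rightarrow> 'n \<Rightarrow> complex) \<Rightarrow> ('n \<Rightarrow> real) \<Rightarrow> bool" where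
  "has_hidden_enclosure N \<sigma> D Hd \<longleftrightarrow>
    (let PB = basin_proj N \<sigma> D; H = diag_mat (\<lambda>j. complex_of_real (Hd j)) in
     \<exists>P. orth_projector P \<and> mat_range P \<subseteq> mat_range PB
        \<and> mat_commute P (PB ** H ** PB)
        \<and> (\<forall>\<alpha><N. mat_commute P (PB ** lindblad_op (\<sigma> \<alpha>) (D \<alpha>) ** PB))
        \<and> \<not> (\<exists>S \<subseteq> basins N \<sigma> D. P = (\<Sum>C\<in>S. diag_proj C)))"

definition uniform_equiv :: "'a set \<Rightarrow> ('a \<times> 'a) set \<Rightarrow> nat \<Rightarrow> bool" where
  "uniform_equiv A R \<nu> \<longleftrightarrow> equiv A R \<and> (\<forall>c \<in> A // R. card c = \<nu>)"

definition coh_vertices :: "('n \<times> 'n) set \<Rightarrow> ('n \<times> 'n) set" where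
  "coh_vertices R = {(j, k). (j, k) \<in> R \<and> j \<noteq> k}"

definition coh_edge :: "nat \<Rightarrow> (nat \<Rightarrow> 'n \<Rightarrow> 'n) \<Rightarrow> (nat \<Rightarrow> 'n \<Rightarrow> complex) \<Rightarrow> ('n \<times> 'n) set
    \<Rightarrow> 'n \<times> 'n \<Rightarrow> nat \<Rightarrow> 'n \<times> 'n \<Rightarrow> bool" where
  "coh_edge N \<sigma> D R x \<alpha> y \<longleftrightarrow> \<alpha> < N \<and> x \<in> coh_vertices R \<and> y \<in> coh_vertices R
     \<and> \<sigma> \<alpha> (fst x) = fst y \<and> \<sigma> \<alpha> (snd x) = snd y
     \<and> D \<alpha> (fst x) \<noteq> 0 \<and> D \<alpha> (snd x) \<noteq> 0"

definition coh_weight :: "(nat \<Rightarrow> 'n \<Rightarrow> complex) \<Rightarrow> nat \<Rightarrow> 'n \<times> 'n \<Rightarrow> complex" where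
  "coh_weight D \<alpha> x = D \<alpha> (fst x) * cnj (D \<alpha> (snd x))
      / complex_of_real (cmod (D \<alpha> (fst x)) * cmod (D \<alpha> (snd x)))"

text \<open>Undirected adjacency (connected components = weakly connected components).\<close>
definition coh_adj :: "nat \<Rightarrow> (nat \<Rightarrow> 'n \<Rightarrow> 'n) \<Rightarrow> (nat \<Rightarrow> 'n \<Rightarrow> complex) \<Rightarrow> ('n \<times> 'n) set
    \<Rightarrow> 'n \<times> 'n \<Rightarrow> 'n \<times> 'n \<Rightarrow> bool" where
  "coh_adj N \<sigma> D R x y \<longleftrightarrow> (\<exists>\<alpha>. coh_edge N \<sigma> D R x \<alpha> y \<or> coh_edge N \<sigma> D R y \<alpha> x)"

definition coh_component :: "nat \<Rightarrow> (nat \<Rightarrow> 'n \<Rightarrow> 'n) \<Rightarrow> (nat \<Rightarrow> 'n \<Rightarrow> complex) \<Rightarrow> ('n \<times> 'n) set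
    \<Rightarrow> ('n \<times> 'n) set \<Rightarrow> bool" where
  "coh_component N \<sigma> D R C \<longleftrightarrow>
     (\<exists>x \<in> coh_vertices R. C = {y. (coh_adj N \<sigma> D R)\<^sup>*\<^sup>* x y})"

definition resonant :: "nat \<Rightarrow> (nat \<Rightarrow> 'n \<Rightarrow> 'n) \<Rightarrow> (nat \<Rightarrow> 'n \<Rightarrow> complex) \<Rightarrow> ('n \<times> 'n) set
    \<Rightarrow> ('n \<times> 'n) set \<Rightarrow> bool" where
  "resonant N \<sigma> D R C \<longleftrightarrow>
     (\<exists>f :: 'n \<times> 'n \<Rightarrow> 'n \<times> 'n \<Rightarrow> complex.
        (\<forall>x\<in>C. \<forall>y\<in>C. cmod (f x y) = 1)
      \<and> (\<forall>x\<in>C. \<forall>y\<in>C. \<forall>z\<in>C. f x y * f y z = f x z)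
      \<and> (\<forall>x y \<alpha>. x \<in> C \<longrightarrow> y \<in> C \<longrightarrow> coh_edge N \<sigma> D R x \<alpha> y \<longrightarrow> f x y = coh_weight D \<alpha> x))"

end

theory Submission
  imports Defs "HOL-Computational_Algebra.Fundamental_Theorem_Algebra" "HOL-Combinatorics.Cycles"
begin

text \<open>
  Both directions rest on the entrywise form of commutation with the compressed operators
  \<open>P\<^sub>B H P\<^sub>B\<close> and \<open>P\<^sub>B L\<^sub>\<alpha> P\<^sub>B\<close>: for a matrix \<open>X\<close> supported on the basins it says that \<open>X\<close> only couples
  indices of equal energy and that \<open>X\<^bsub>\<sigma>\<^sub>\<alpha> j, \<sigma>\<^sub>\<alpha> k\<^esub> D\<^bsub>\<alpha>,k\<^esub> = D\<^bsub>\<alpha>,j\<^esub> X\<^bsub>j, k\<^esub>\<close> for \<open>j, k\<close> in the basins.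

  A hidden enclosure \<open>P\<close> is Hermitian and, not being a sum of basin projectors, has a nonzero
  entry \<open>P\<^bsub>j\<^sub>0, k\<^sub>0\<^esub>\<close> with \<open>j\<^sub>0 \<noteq> k\<^sub>0\<close>. Nonzero entries of \<open>P\<close> propagate along the edges of the coherence
  graph, each step multiplying by the edge weight, so the component of \<open>(j\<^sub>0, k\<^sub>0)\<close> is resonant; the
  equivalence relation it generates is invariant under the active parts of the \<open>\<sigma>\<^sub>\<alpha>\<close>, which map
  its classes bijectively onto each other, hence it is uniform. An index with vanishing
  coefficient in \<open>L\<^sub>\<alpha>\<close> is the only such index on its \<open>\<sigma>\<^sub>\<alpha>\<close>-cycle, so its image is reached by
  walking backwards along active predecessors, which the relation also respects.

  Conversely, the phases of a resonant component define a matrix \<open>X\<close> on that component which,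
  together with \<open>X\<^sup>*\<close>, commutes with all compressed operators. A Hermitian combination of \<open>X\<close>
  and \<open>X\<^sup>*\<close> is non-diagonal, and then so is one of its spectral projectors; being a polynomial in
  it, that projector is a hidden enclosure.
\<close>

section \<open>Polynomials in a matrix\<close>

lemma mat_entry: "mat c $ i $ j = (if i = j then c else 0)"
  by (simp add: mat_def)

lemma matrix_mult_entry: "(A ** B) $ i $ j = (\<Sum>k\<in>UNIV. A $ i $ k * B $ k $ j)"
  by (simp add: matrix_matrix_mult_def)

lemma mat_matrix_mult_entry: "(mat c ** M) $ i $ j = c * M $ i $ j"
  by (simp add: matrix_mult_entry mat_entry if_distrib if_distribR cong: if_cong)

lemma matrix_mat_mult_entry:
  fixes M :: "'a::comm_ring_1^'n::finite^'n"
  shows "(M ** mat c) $ i $ j = M $ i $ j * c"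
  by (simp add: matrix_mult_entry mat_entry if_distrib if_distribR cong: if_cong)

lemma mat_matrix_mult_commute:
  fixes M :: "'a::comm_ring_1^'n::finite^'n"
  shows "mat c ** M = M ** mat c"
  by (simp add: vec_eq_iff mat_matrix_mult_entry matrix_mat_mult_entry mult.commute)

lemma mat_add: "mat (a + b) = (mat a + mat b :: 'a::monoid_add^'n^'n)"
  by (simp add: vec_eq_iff mat_entry)

lemma mat_diff: "mat (a - b) = (mat a - mat b :: 'a::group_add^'n^'n)"
  by (simp add: vec_eq_iff mat_entry)

lemma mat_uminus: "mat (- a) = (- mat a :: 'a::group_add^'n^'n)"
  by (simp add: vec_eq_iff mat_entry)

lemma mat_mult_mat: "mat a ** mat b = (mat (a * b) :: 'a::comm_ring_1^'n::finite^'n)"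
  by (simp add: vec_eq_iff mat_matrix_mult_entry mat_entry)

lemma matrix_add_rdistrib: "(B + C) ** A = B ** A + C ** (A :: 'a::semiring_1^'p^'n::finite)"
  by (simp add: vec_eq_iff matrix_mult_entry sum.distrib distrib_right)

lemma matrix_diff_ldistrib: "A ** (B - C) = A ** B - A ** (C :: 'a::ring_1^'p^'n::finite)"
  by (simp add: vec_eq_iff matrix_mult_entry sum_subtractf right_diff_distrib)

lemma matrix_diff_rdistrib: "(B - C) ** A = B ** A - C ** (A :: 'a::ring_1^'p^'n::finite)"
  by (simp add: vec_eq_iff matrix_mult_entry sum_subtractf left_diff_distrib)

lemma matrix_sum_entry: "(sum f S :: 'a::comm_monoid_add^'n^'m) $ i $ j = (\<Sum>x\<in>S. f x $ i $ j)"
  by (simp add: sum_component)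

definition mat_poly :: "'a::comm_ring_1 poly \<Rightarrow> 'a^'n::finite^'n \<Rightarrow> 'a^'n^'n" where
  "mat_poly p Y = fold_coeffs (\<lambda>c M. mat c + Y ** M) p 0"

lemma mat_poly_0 [simp]: "mat_poly 0 Y = 0"
  by (simp add: mat_poly_def)

lemma mat_poly_pCons [simp]: "mat_poly (pCons c p) Y = mat c + Y ** mat_poly p Y"
  by (cases "p = 0 \<and> c = 0") (auto simp: mat_poly_def)

lemma mat_poly_add: "mat_poly (p + q) Y = mat_poly p Y + mat_poly q Y"
proof (induction p arbitrary: q)
  case (pCons a p)
  then show ?case
    by (cases q) (simp add: matrix_add_ldistrib mat_add algebra_simps)
qed simp

lemma mat_poly_smult: "mat_poly (smult c p) Y = mat c ** mat_poly p Y"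
proof (induction p)
  case (pCons a p)
  have "Y ** (mat c ** mat_poly p Y) = mat c ** (Y ** mat_poly p Y)"
    by (metis mat_matrix_mult_commute matrix_mul_assoc)
  then show ?case using pCons by (simp add: matrix_add_ldistrib mat_mult_mat)
qed simp

lemma mat_poly_diff: "mat_poly (p - q) Y = mat_poly p Y - mat_poly q Y"
  using mat_poly_add[of "p - q" q Y] by (simp add: algebra_simps)

lemma mat_poly_mult: "mat_poly (p * q) Y = mat_poly p Y ** mat_poly q Y"
proof (induction p)
  case (pCons a p)
  have "pCons a p * q = smult a q + pCons 0 (p * q)" by simp
  then show ?case using pCons
    by (simp add: mat_poly_add mat_poly_smult matrix_add_rdistrib matrix_mul_assoc)
qed simp

lemma mat_poly_linear: "mat_poly [:- c, 1:] Y = Y - mat c"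
  by (simp add: mat_uminus)

lemma mat_poly_pcompose: "mat_poly (pcompose p q) Y = mat_poly p (mat_poly q Y)"
  by (induction p) (simp_all add: pcompose_pCons mat_poly_add mat_poly_mult)

lemma mat_poly_sum: "mat_poly (sum f A) Y = (\<Sum>i\<in>A. mat_poly (f i) Y)"
  by (induction A rule: infinite_finite_induct) (simp_all add: mat_poly_add)

lemma mat_poly_commute: "Z ** Y = Y ** Z \<Longrightarrow> Z ** mat_poly p Y = mat_poly p Y ** Z"
proof (induction p)
  case (pCons a p)
  have "Z ** (Y ** mat_poly p Y) = (Y ** mat_poly p Y) ** Z"
    by (metis pCons matrix_mul_assoc)
  then show ?case
    by (simp add: matrix_add_ldistrib matrix_add_rdistrib mat_matrix_mult_commute)
qed simp

lemma mat_poly_eigen: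
  assumes "Y ** W = mat a ** W"
  shows "mat_poly p Y ** W = mat (poly p a) ** W"
proof (induction p)
  case (pCons c p)
  have "Y ** mat_poly p Y ** W = Y ** (mat (poly p a) ** W)"
    by (simp add: pCons flip: matrix_mul_assoc)
  also have "\<dots> = mat (poly p a) ** (mat a ** W)"
    by (metis assms mat_matrix_mult_commute matrix_mul_assoc)
  finally have "Y ** mat_poly p Y ** W = mat (a * poly p a) ** W"
    by (simp add: matrix_mul_assoc mat_mult_mat mult.commute)
  then show ?case
    by (simp add: matrix_add_rdistrib mat_add)
qed simp

lemma mat_poly_agree:
  assumes agree: "Y' ** W = Y ** W" and comm: "W ** Y = Y ** W"
  shows "mat_poly p Y' ** W = mat_poly p Y ** W"
proof (induction p)
  case (pCons c p)
  have cm: "W ** mat_poly p Y = mat_poly p Y ** W"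
    by (rule mat_poly_commute[OF comm])
  have "Y' ** mat_poly p Y' ** W = (Y' ** W) ** mat_poly p Y"
    by (simp add: pCons cm flip: matrix_mul_assoc)
  also have "\<dots> = Y ** mat_poly p Y ** W"
    by (simp add: agree cm flip: matrix_mul_assoc)
  finally show ?case
    by (simp add: matrix_add_rdistrib)
qed simp

section \<open>Hermitian matrices and their spectral projectors\<close>

lemma cadjoint_entry: "cadjoint A $ i $ j = cnj (A $ j $ i)"
  by (simp add: cadjoint_def)

lemma cadjoint_cadjoint [simp]: "cadjoint (cadjoint A) = A"
  by (simp add: vec_eq_iff cadjoint_entry)

lemma cadjoint_mult: "cadjoint (A ** B) = cadjoint B ** cadjoint A"
  by (simp add: vec_eq_iff cadjoint_entry matrix_mult_entry mult.commute)

lemma cadjoint_add: "cadjoint (A + B) = cadjoint A + cadjoint B"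
  by (simp add: vec_eq_iff cadjoint_entry)

lemma cadjoint_diff: "cadjoint (A - B) = cadjoint A - cadjoint B"
  by (simp add: vec_eq_iff cadjoint_entry)

lemma cadjoint_mat: "cadjoint (mat c :: complex^'n::finite^'n) = mat (cnj c)"
  by (simp add: vec_eq_iff cadjoint_entry mat_entry)

lemma hermitian_entry_cnj: "cadjoint Y = Y \<Longrightarrow> cnj (Y $ i $ j) = Y $ j $ i"
  by (metis cadjoint_entry)

lemma hermitian_shift:
  assumes "cadjoint Y = Y" "Im a = 0"
  shows "cadjoint (Y - mat a) = Y - mat a"
proof -
  have "cnj a = a"
    using assms(2) by (simp add: complex_eq_iff)
  then show ?thesis
    using assms(1) by (simp add: cadjoint_diff cadjoint_mat)
qed

lemma cadjoint_mult_self_eq_0: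
  fixes W :: "complex^'n::finite^'m::finite"
  assumes "cadjoint W ** W = 0"
  shows "W = 0"
proof -
  have "W $ k $ j = 0" for k j
  proof -
    have "complex_of_real (\<Sum>k\<in>UNIV. (cmod (W $ k $ j))\<^sup>2) = (cadjoint W ** W) $ j $ j"
      unfolding of_real_sum matrix_mult_entry cadjoint_entry
      by (rule sum.cong) (simp_all add: complex_norm_square mult.commute flip: of_real_power)
    then have "(\<Sum>k\<in>UNIV. (cmod (W $ k $ j))\<^sup>2) = 0"
      using assms of_real_eq_0_iff by fastforce
    then show ?thesis
      by (simp add: sum_nonneg_eq_0_iff)
  qed
  then show ?thesis
    by (simp add: vec_eq_iff)
qed

lemma hermitian_square_cancel:
  fixes Z W :: "complex^'n::finite^'n"
  assumes "cadjoint Z = Z" and "Z ** (Z ** W) = 0"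
  shows "Z ** W = 0"
proof (rule cadjoint_mult_self_eq_0)
  have "cadjoint (Z ** W) ** (Z ** W) = cadjoint W ** (Z ** (Z ** W))"
    using assms(1) by (simp add: cadjoint_mult matrix_mul_assoc)
  then show "cadjoint (Z ** W) ** (Z ** W) = 0"
    using assms(2) by simp
qed

text \<open>\<open>W\<^sup>* Y W\<close> is Hermitian, yet equal to \<open>c W\<^sup>* W\<close>.\<close>
lemma hermitian_nonreal_cancel:
  fixes Y W :: "complex^'n::finite^'n"
  assumes herm: "cadjoint Y = Y" and c: "Im c \<noteq> 0" and eigen: "(Y - mat c) ** W = 0"
  shows "W = 0"
proof (rule cadjoint_mult_self_eq_0)
  have YW: "Y ** W = mat c ** W"
    using eigen by (simp add: matrix_diff_rdistrib)
  let ?G = "cadjoint W ** W"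
  have "cadjoint W ** Y ** W = cadjoint W ** (mat c ** W)"
    by (simp add: YW flip: matrix_mul_assoc)
  also have "\<dots> = mat c ** ?G"
    by (metis mat_matrix_mult_commute matrix_mul_assoc)
  finally have "cadjoint W ** Y ** W = mat c ** ?G" .
  moreover have "cadjoint (cadjoint W ** Y ** W) = cadjoint W ** Y ** W"
    by (simp add: cadjoint_mult herm matrix_mul_assoc)
  ultimately have "mat (cnj c) ** ?G = mat c ** ?G"
    by (metis cadjoint_mult cadjoint_cadjoint cadjoint_mat mat_matrix_mult_commute)
  then have "mat (c - cnj c) ** ?G = 0"
    by (simp add: mat_diff matrix_diff_rdistrib)
  moreover have "c - cnj c \<noteq> 0"
    using c by (simp add: complex_eq_iff)
  ultimately show "?G = 0"
    by (simp add: vec_eq_iff mat_matrix_mult_entry)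
qed

lemma mat_of_real_mult: "mat (complex_of_real r) ** M = r *\<^sub>R (M :: complex^'n::finite^'m)"
  by (simp add: vec_eq_iff mat_matrix_mult_entry) (simp add: scaleR_conv_of_real)

lemma annihilating_poly_exists:
  fixes Y :: "complex^'n::finite^'n"
  shows "\<exists>p. p \<noteq> 0 \<and> mat_poly p Y = 0"
proof -
  define K where "K = DIM(complex^'n^'n)"
  define pw where "pw i = mat_poly ([:0, 1:] ^ i) Y" for i
  show ?thesis
  proof (cases "inj_on pw {..K}")
    case False
    then obtain i j where ij: "i \<noteq> j" "pw i = pw j"
      unfolding inj_on_def by auto
    let ?p = "[:0, 1:] ^ i - [:0, 1:] ^ j :: complex poly"
    have "?p \<noteq> 0"
      using ij(1) by (metis degree_linear_power right_minus_eq)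
    moreover have "mat_poly ?p Y = 0"
      using ij(2) by (simp add: mat_poly_diff pw_def)
    ultimately show ?thesis by blast
  next
    case True
    let ?S = "pw ` {..K}"
    have "card ?S = Suc K"
      using True by (simp add: card_image)
    then have "dependent ?S"
      by (intro dependent_biggerset) (simp add: K_def)
    then obtain u where u: "\<exists>v\<in>?S. u v \<noteq> 0" "(\<Sum>v\<in>?S. u v *\<^sub>R v) = 0"
      using real_vector.dependent_finite[of ?S] by auto
    define p where "p = (\<Sum>i\<le>K. monom (complex_of_real (u (pw i))) i)"
    have "mat_poly p Y = (\<Sum>i\<le>K. u (pw i) *\<^sub>R pw i)"
      by (simp add: p_def mat_poly_sum monom_altdef mat_poly_smult mat_of_real_mult pw_def)
    also have "\<dots> = 0"
      using u(2) by (simp add: sum.reindex[OF True])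
    finally have "mat_poly p Y = 0" .
    moreover obtain i0 where "i0 \<le> K" "u (pw i0) \<noteq> 0"
      using u(1) by auto
    then have "coeff p i0 \<noteq> 0"
      by (simp add: p_def coeff_sum coeff_monom)
    then have "p \<noteq> 0" by auto
    ultimately show ?thesis by blast
  qed
qed

definition is_diagonal :: "'a::zero^'n^'n \<Rightarrow> bool" where
  "is_diagonal M \<longleftrightarrow> (\<forall>i j. i \<noteq> j \<longrightarrow> M $ i $ j = 0)"

lemma hermitian_annihilator_cancel_root:
  fixes Y :: "complex^'n::finite^'n"
  assumes herm: "cadjoint Y = Y" and ann: "mat_poly ([:- c, 1:] * r) Y = 0"
    and c: "Im c \<noteq> 0 \<or> poly r c = 0"
  shows "mat_poly r Y = 0"
proof (cases "Im c = 0")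
  case False
  have "(Y - mat c) ** mat_poly r Y = 0"
    using ann unfolding mat_poly_mult mat_poly_linear .
  then show ?thesis
    using hermitian_nonreal_cancel[OF herm False] by blast
next
  case True
  then obtain s where s: "r = [:- c, 1:] * s"
    using c by (metis poly_eq_0_iff_dvd dvdE)
  have "(Y - mat c) ** ((Y - mat c) ** mat_poly s Y) = 0"
    using ann unfolding s mat_poly_mult mat_poly_linear .
  then have "(Y - mat c) ** mat_poly s Y = 0"
    by (rule hermitian_square_cancel[OF hermitian_shift[OF herm True]])
  then show ?thesis
    unfolding s mat_poly_mult mat_poly_linear .
qed

lemma hermitian_eigenprojector:
  fixes Y :: "complex^'n::finite^'n"
  assumes herm: "cadjoint Y = Y" and a: "Im a = 0"
    and ann: "mat_poly ([:- a, 1:] * r) Y = 0" and ra: "poly r a \<noteq> 0"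
  defines "Q \<equiv> mat_poly (smult (1 / poly r a) r) Y"
  shows "orth_projector Q" and "Y ** Q = mat a ** Q"
proof -
  have Qr: "Q = mat (1 / poly r a) ** mat_poly r Y"
    by (simp add: Q_def mat_poly_smult)
  have "(Y - mat a) ** mat_poly r Y = 0"
    using ann unfolding mat_poly_mult mat_poly_linear .
  then have "(Y - mat a) ** Q = 0"
    unfolding Qr by (metis mat_matrix_mult_commute matrix_mul_assoc times0_right)
  then show YQ: "Y ** Q = mat a ** Q"
    by (simp add: matrix_diff_rdistrib)
  have t_a: "poly (smult (1 / poly r a) r) a = 1"
    using ra by simp
  have QQ: "Q ** Q = Q"
    using mat_poly_eigen[OF YQ, of "smult (1 / poly r a) r"] t_a by (simp add: Q_def)
  have "Y ** Q = Q ** Y"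
    unfolding Q_def by (rule mat_poly_commute) simp
  then have "Y ** cadjoint Q = cadjoint (mat a ** Q)"
    by (simp add: YQ herm cadjoint_mult flip: YQ)
  also have "\<dots> = mat a ** cadjoint Q"
  proof -
    have "cnj a = a"
      using a by (simp add: complex_eq_iff)
    then show ?thesis
      by (simp add: cadjoint_mult cadjoint_mat mat_matrix_mult_commute)
  qed
  finally have "Q ** cadjoint Q = cadjoint Q"
    using mat_poly_eigen[of Y "cadjoint Q" a "smult (1 / poly r a) r"] t_a by (simp add: Q_def)
  then have "cadjoint Q = Q"
    by (metis cadjoint_cadjoint cadjoint_mult)
  with QQ show "orth_projector Q"
    by (simp add: orth_projector_def)
qed

lemma annihilator_merge_eigenvalue:
  fixes Y Q :: "'a::comm_ring_1^'n::finite^'n"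
  assumes QQ: "Q ** Q = Q" and YQ: "Y ** Q = mat a ** Q" and comm: "Y ** Q = Q ** Y"
    and b: "poly r b = 0" and rY: "mat_poly r Y ** (mat 1 - Q) = 0"
  shows "mat_poly r (Y + mat (b - a) ** Q) = 0"
proof -
  let ?Y' = "Y + mat (b - a) ** Q" and ?W = "mat 1 - Q"
  have "?Y' ** Q = mat a ** Q + mat (b - a) ** Q"
    by (simp add: matrix_add_rdistrib YQ QQ flip: matrix_mul_assoc)
  also have "\<dots> = mat b ** Q"
    by (simp flip: matrix_add_rdistrib mat_add)
  finally have "mat_poly r ?Y' ** Q = 0"
    using mat_poly_eigen[of ?Y' Q b r] b by simp
  moreover have "mat_poly r ?Y' ** ?W = 0"
  proof -
    have "Q ** ?W = 0"
      using QQ by (simp add: matrix_diff_ldistrib)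
    then have "?Y' ** ?W = Y ** ?W"
      by (simp add: matrix_add_rdistrib flip: matrix_mul_assoc)
    moreover have "?W ** Y = Y ** ?W"
      using comm by (simp add: matrix_diff_ldistrib matrix_diff_rdistrib)
    ultimately show ?thesis
      using mat_poly_agree rY by metis
  qed
  ultimately have "mat_poly r ?Y' ** (Q + ?W) = 0"
    by (simp only: matrix_add_ldistrib add_0)
  then show ?thesis
    by simp
qed

text \<open>With \<open>Q\<close> the diagonal spectral projector of \<open>Y\<close> for \<open>a\<close>, the witness is
  \<open>s(Y) = Y + (b - a) Q\<close>: it moves the eigenvalue \<open>a\<close> onto the root \<open>b\<close> of \<open>r\<close>, so that \<open>r\<close>
  annihilates it, and it has the same off-diagonal entries as \<open>Y\<close>.\<close>
lemma hermitian_merge_eigenvalue: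
  fixes Y :: "complex^'n::finite^'n"
  assumes herm: "cadjoint Y = Y" and nondiag: "\<not> is_diagonal Y"
    and a: "Im a = 0" and b: "Im b = 0" "poly r b = 0"
    and ann: "mat_poly ([:- a, 1:] * r) Y = 0" and ra: "poly r a \<noteq> 0"
    and diag: "is_diagonal (mat_poly (smult (1 / poly r a) r) Y)"
  obtains s where "cadjoint (mat_poly s Y) = mat_poly s Y" and "\<not> is_diagonal (mat_poly s Y)"
    and "mat_poly r (mat_poly s Y) = 0"
proof -
  define t where "t = smult (1 / poly r a) r"
  define Q where "Q = mat_poly t Y"
  have Q: "Q ** Q = Q" "cadjoint Q = Q" "Y ** Q = mat a ** Q"
    using hermitian_eigenprojector[OF herm a ann ra]
    by (simp_all add: Q_def t_def orth_projector_def)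
  define s where "s = [:0, 1:] + smult (b - a) t"
  have Y': "mat_poly s Y = Y + mat (b - a) ** Q"
    by (simp add: s_def mat_poly_add mat_poly_smult Q_def)
  have "cnj (b - a) = b - a"
    using a b by (simp add: complex_eq_iff)
  then have "cadjoint (mat_poly s Y) = mat_poly s Y"
    by (simp add: Y' cadjoint_add cadjoint_mult cadjoint_mat herm Q mat_matrix_mult_commute)
  moreover have "\<not> is_diagonal (mat_poly s Y)"
    using nondiag diag by (auto simp: is_diagonal_def Y' mat_matrix_mult_entry Q_def t_def)
  moreover have "mat_poly r (mat_poly s Y) = 0"
    unfolding Y'
  proof (rule annihilator_merge_eigenvalue[OF Q(1) Q(3) _ b(2)])
    show "Y ** Q = Q ** Y"
      unfolding Q_def by (rule mat_poly_commute) simp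
    have "mat (poly r a) ** Q = mat_poly r Y"
      using ra by (simp add: Q_def t_def mat_poly_smult matrix_mul_assoc mat_mult_mat)
    then show "mat_poly r Y ** (mat 1 - Q) = 0"
      using mat_poly_eigen[OF Q(3), of r] by (simp add: matrix_diff_ldistrib)
  qed
  ultimately show ?thesis
    using that by blast
qed

lemma hermitian_annihilator_reduce:
  fixes Y :: "complex^'n::finite^'n"
  assumes p: "p \<noteq> 0" "mat_poly p Y = 0" and herm: "cadjoint Y = Y"
  obtains (smaller) r where "r \<noteq> 0" "degree r < degree p" "mat_poly r Y = 0"
  | (simple_real_root) a r where "p = [:- a, 1:] * r" "r \<noteq> 0" "degree r < degree p"
      "Im a = 0" "poly r a \<noteq> 0" "\<forall>c. poly r c = 0 \<longrightarrow> Im c = 0"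
proof -
  have "\<not> constant (poly p)"
  proof
    assume "constant (poly p)"
    then obtain c where "p = [:c:]"
      by (metis constant_degree degree_eq_zeroE)
    with p show False
      by (simp add: vec_eq_iff mat_entry) metis
  qed
  then obtain a where pa: "poly p a = 0" and a: "Im a \<noteq> 0 \<or> (\<forall>c. poly p c = 0 \<longrightarrow> Im c = 0)"
    using fundamental_theorem_of_algebra by metis
  obtain r where r: "p = [:- a, 1:] * r"
    using pa by (metis poly_eq_0_iff_dvd dvdE)
  with p(1) have r0: "r \<noteq> 0"
    by auto
  have "[:- a, 1:] \<noteq> 0"
    by simp
  from degree_mult_eq[OF this r0] have deg: "degree r < degree p"
    unfolding r by simp
  show ?thesis
  proof (cases "Im a \<noteq> 0 \<or> poly r a = 0")
    case True
    then show ?thesis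
      using smaller[OF r0 deg] hermitian_annihilator_cancel_root herm p(2) r by blast
  next
    case False
    then show ?thesis
      using simple_real_root[OF r r0 deg] a r by auto
  qed
qed

text \<open>Induction on the degree of \<open>p\<close>: at a simple real root the spectral projector is either
  non-diagonal or, being diagonal, can be merged into another eigenvalue.\<close>
lemma hermitian_annihilated_projector:
  fixes Y :: "complex^'n::finite^'n"
  assumes "p \<noteq> 0" and "mat_poly p Y = 0" and "cadjoint Y = Y" and "\<not> is_diagonal Y"
  shows "\<exists>t. orth_projector (mat_poly t Y) \<and> \<not> is_diagonal (mat_poly t Y)"
  using assms
proof (induction "degree p" arbitrary: p Y rule: less_induct)
  case less
  have herm: "cadjoint Y = Y" and nondiag: "\<not> is_diagonal Y"
    using less.prems by auto
  from less.prems(1,2) herm show ?case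
  proof (cases rule: hermitian_annihilator_reduce)
    case (smaller r)
    then show ?thesis
      using less.hyps herm nondiag by blast
  next
    case (simple_real_root a r)
    note root = simple_real_root
    note eigenprojector = hermitian_eigenprojector[OF herm root(4) less.prems(2)[unfolded root(1)] root(5)]
    show ?thesis
    proof (cases "is_diagonal (mat_poly (smult (1 / poly r a) r) Y)")
      case False
      then show ?thesis
        using eigenprojector(1) by blast
    next
      case diag: True
      have "\<not> constant (poly r)"
      proof
        assume "constant (poly r)"
        then obtain c where "r = [:c:]"
          by (metis constant_degree degree_eq_zeroE)
        then have "Y = mat a"
          using eigenprojector(2) root(5) by simp
        then show False
          using nondiag by (simp add: is_diagonal_def mat_entry)
      qed
      then obtain b where b: "poly r b = 0" "Im b = 0"
        using fundamental_theorem_of_algebra root(6) by blast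
      obtain s where "cadjoint (mat_poly s Y) = mat_poly s Y" "\<not> is_diagonal (mat_poly s Y)"
        "mat_poly r (mat_poly s Y) = 0"
        using hermitian_merge_eigenvalue[OF herm nondiag root(4) b(2,1)
            less.prems(2)[unfolded root(1)] root(5) diag] .
      then obtain t where "orth_projector (mat_poly t (mat_poly s Y))"
        "\<not> is_diagonal (mat_poly t (mat_poly s Y))"
        using less.hyps[OF root(3,2)] by blast
      then show ?thesis
        by (metis mat_poly_pcompose)
    qed
  qed
qed

lemma hermitian_non_diagonal_projector:
  fixes Y :: "complex^'n::finite^'n"
  assumes "cadjoint Y = Y" and "\<not> is_diagonal Y"
  shows "\<exists>t. orth_projector (mat_poly t Y) \<and> \<not> is_diagonal (mat_poly t Y)"
  using annihilating_poly_exists[of Y] hermitian_annihilated_projector assms by blast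

section \<open>Diagonal projectors and supports\<close>

definition supported_in :: "'n set \<Rightarrow> 'a::zero^'n^'n \<Rightarrow> bool" where
  "supported_in B X \<longleftrightarrow> (\<forall>a b. X $ a $ b \<noteq> 0 \<longrightarrow> a \<in> B \<and> b \<in> B)"

lemma mat_poly_outside_support:
  fixes Y :: "'a::comm_ring_1^'n::finite^'n"
  assumes Y: "supported_in B Y" and "a \<notin> B \<or> b \<notin> B"
  shows "mat_poly t Y $ a $ b = (if a = b then poly t 0 else 0)"
  using assms(2)
proof (induction t arbitrary: a b)
  case (pCons c p)
  have "Y $ a $ k * mat_poly p Y $ k $ b = 0" for k
  proof (cases "a \<in> B \<and> k \<in> B")
    case True
    then have "k \<noteq> b" "b \<notin> B"
      using pCons.prems by auto
    then show ?thesis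
      using pCons.IH[of k b] by simp
  next
    case False
    then have "Y $ a $ k = 0"
      using Y unfolding supported_in_def by blast
    then show ?thesis
      by simp
  qed
  then have "(Y ** mat_poly p Y) $ a $ b = 0"
    by (simp add: matrix_mult_entry)
  then show ?case
    by (simp add: mat_entry)
qed simp

lemma orth_projector_complement: "orth_projector P \<Longrightarrow> orth_projector (mat 1 - P)"
  by (simp add: orth_projector_def matrix_diff_ldistrib matrix_diff_rdistrib cadjoint_diff
      cadjoint_mat)

lemma orth_projector_diagonal_entry:
  assumes "orth_projector P" and "\<And>k. k \<noteq> j \<Longrightarrow> P $ j $ k = 0"
  shows "P $ j $ j = 0 \<or> P $ j $ j = 1"
proof -
  have "P $ j $ j = (P ** P) $ j $ j"
    using assms(1) by (simp add: orth_projector_def)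
  also have "\<dots> = (\<Sum>k\<in>UNIV. P $ j $ k * P $ k $ j)"
    by (rule matrix_mult_entry)
  also have "\<dots> = (\<Sum>k\<in>UNIV. if k = j then P $ j $ j * P $ j $ j else 0)"
    by (rule sum.cong) (auto simp: assms(2))
  also have "\<dots> = P $ j $ j * P $ j $ j"
    by simp
  finally show ?thesis
    by (metis mult_cancel_left1)
qed

text \<open>A polynomial \<open>t(Y)\<close> acts outside the support of \<open>Y\<close> as the scalar \<open>t(0)\<close>, which is \<open>0\<close> or
  \<open>1\<close> when \<open>t(Y)\<close> is a projector.\<close>
lemma supported_poly_projector:
  fixes Y :: "complex^'n::finite^'n"
  assumes Y: "supported_in B Y" and Q: "orth_projector (mat_poly t Y)"
  shows "supported_in B (if poly t 0 = 0 then mat_poly t Y else mat 1 - mat_poly t Y)"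
  unfolding supported_in_def
proof (intro allI impI)
  fix a b
  assume nz: "(if poly t 0 = 0 then mat_poly t Y else mat 1 - mat_poly t Y) $ a $ b \<noteq> 0"
  show "a \<in> B \<and> b \<in> B"
  proof (rule ccontr)
    assume "\<not> (a \<in> B \<and> b \<in> B)"
    then obtain c where "c \<notin> B" and out: "a \<notin> B \<or> b \<notin> B"
      by blast
    have "poly t 0 = 0 \<or> poly t 0 = 1"
      using orth_projector_diagonal_entry[OF Q, of c] mat_poly_outside_support[OF Y] \<open>c \<notin> B\<close>
      by auto
    moreover have "mat_poly t Y $ a $ b = (if a = b then poly t 0 else 0)"
      by (rule mat_poly_outside_support[OF Y out])
    ultimately show False
      using nz by (cases "a = b") (auto simp: mat_entry)
  qed
qed

lemma commute_mat_mult: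
  fixes A M :: "'a::comm_ring_1^'n::finite^'n"
  shows "A ** M = M ** A \<Longrightarrow> (mat c ** A) ** M = M ** (mat c ** A)"
  by (metis mat_matrix_mult_commute matrix_mul_assoc)

text \<open>Either \<open>X + X\<^sup>*\<close> or \<open>i(X - X\<^sup>*)\<close> keeps a nonzero off-diagonal entry of \<open>X\<close>.\<close>
lemma hermitian_part_non_diagonal:
  fixes X :: "complex^'n::finite^'n"
  assumes "\<not> is_diagonal X"
  obtains Y where "cadjoint Y = Y" and "\<not> is_diagonal Y"
    and "\<forall>M. X ** M = M ** X \<and> cadjoint X ** M = M ** cadjoint X \<longrightarrow> Y ** M = M ** Y"
    and "\<forall>B. supported_in B X \<longrightarrow> supported_in B Y"
proof -
  define Y1 where "Y1 = X + cadjoint X"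
  define Y2 where "Y2 = mat \<i> ** X - mat \<i> ** cadjoint X"
  have Y1: "Y1 $ a $ b = X $ a $ b + cnj (X $ b $ a)" for a b
    by (simp add: Y1_def cadjoint_entry)
  have Y2: "Y2 $ a $ b = \<i> * X $ a $ b - \<i> * cnj (X $ b $ a)" for a b
    by (simp add: Y2_def cadjoint_entry mat_matrix_mult_entry)
  have herm: "cadjoint Y1 = Y1" "cadjoint Y2 = Y2"
    by (simp_all add: vec_eq_iff cadjoint_entry Y1 Y2 algebra_simps)
  have comm: "Y1 ** M = M ** Y1" "Y2 ** M = M ** Y2"
    if "X ** M = M ** X" "cadjoint X ** M = M ** cadjoint X" for M
    using that commute_mat_mult[OF that(1)] commute_mat_mult[OF that(2)]
    by (simp_all add: Y1_def Y2_def matrix_add_ldistrib matrix_add_rdistrib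
        matrix_diff_ldistrib matrix_diff_rdistrib)
  have supp: "supported_in B Y1" "supported_in B Y2" if "supported_in B X" for B
  proof -
    have "X $ a $ b = 0" "X $ b $ a = 0" if "\<not> (a \<in> B \<and> b \<in> B)" for a b
      using \<open>supported_in B X\<close> that unfolding supported_in_def by blast+
    then have "Y1 $ a $ b = 0" "Y2 $ a $ b = 0" if "\<not> (a \<in> B \<and> b \<in> B)" for a b
      using that by (simp_all add: Y1 Y2)
    then show "supported_in B Y1" "supported_in B Y2"
      unfolding supported_in_def by blast+
  qed
  obtain i j where ij: "i \<noteq> j" "X $ i $ j \<noteq> 0"
    using assms by (auto simp: is_diagonal_def)
  have "Y1 $ i $ j \<noteq> 0 \<or> Y2 $ i $ j \<noteq> 0"
  proof (rule ccontr)
    assume "\<not> ?thesis"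
    then have "X $ i $ j + cnj (X $ j $ i) = 0" and "\<i> * (X $ i $ j - cnj (X $ j $ i)) = 0"
      by (simp_all only: Y1 Y2 right_diff_distrib not_not de_Morgan_disj)
    then have "(X $ i $ j + cnj (X $ j $ i)) + (X $ i $ j - cnj (X $ j $ i)) = 0"
      by simp
    then show False
      using ij(2) by simp
  qed
  moreover have "\<forall>M. X ** M = M ** X \<and> cadjoint X ** M = M ** cadjoint X \<longrightarrow> Y1 ** M = M ** Y1"
    "\<forall>M. X ** M = M ** X \<and> cadjoint X ** M = M ** cadjoint X \<longrightarrow> Y2 ** M = M ** Y2"
    using comm by blast+
  moreover have "\<forall>B. supported_in B X \<longrightarrow> supported_in B Y1"
    "\<forall>B. supported_in B X \<longrightarrow> supported_in B Y2"
    using supp by blast+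
  ultimately show ?thesis
    using that[of Y1] that[of Y2] herm ij(1) unfolding is_diagonal_def by blast
qed

lemma diag_proj_entry: "diag_proj C $ i $ j = (if i = j \<and> i \<in> C then 1 else 0)"
  by (simp add: diag_proj_def)

lemma sum_diag_proj_disjoint:
  assumes "finite S" and "disjoint S"
  shows "(\<Sum>C\<in>S. diag_proj C) = (diag_proj (\<Union>S) :: complex^'n::finite^'n)"
proof -
  have "(\<Sum>C\<in>S. diag_proj C :: complex^'n^'n) $ i $ i = diag_proj (\<Union>S) $ i $ i" for i
  proof (cases "i \<in> \<Union>S")
    case True
    then obtain C0 where C0: "C0 \<in> S" "i \<in> C0"
      by auto
    have "(\<Sum>C\<in>S. diag_proj C :: complex^'n^'n) $ i $ i = (\<Sum>C\<in>S. if C = C0 then 1 else 0)"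
      unfolding matrix_sum_entry
      by (rule sum.cong) (use C0 assms(2) in \<open>auto simp: diag_proj_entry disjoint_def\<close>)
    then show ?thesis
      using C0 assms(1) True by (simp add: diag_proj_entry)
  qed (auto simp: matrix_sum_entry diag_proj_entry)
  moreover have "(\<Sum>C\<in>S. diag_proj C :: complex^'n^'n) $ i $ j = diag_proj (\<Union>S) $ i $ j"
    if "i \<noteq> j" for i j
    using that by (simp add: matrix_sum_entry diag_proj_entry)
  ultimately show ?thesis
    by (metis vec_eq_iff)
qed

lemma is_diagonal_sum_diag_proj: "is_diagonal (\<Sum>C\<in>S. diag_proj C :: complex^'n::finite^'n)"
  by (simp add: is_diagonal_def matrix_sum_entry diag_proj_entry)

lemma diagonal_projector_eq:
  assumes "orth_projector P" and "is_diagonal P"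
  shows "P = diag_proj {j. P $ j $ j = 1}"
proof -
  have "P $ i $ j = diag_proj {j. P $ j $ j = 1} $ i $ j" for i j
  proof (cases "i = j")
    case True
    have "P $ j $ j = 0 \<or> P $ j $ j = 1"
      using orth_projector_diagonal_entry[OF assms(1), of j] assms(2) by (simp add: is_diagonal_def)
    with True show ?thesis
      by (cases "P $ j $ j = 1") (simp_all add: diag_proj_entry)
  next
    case False
    then show ?thesis
      using assms(2) by (simp add: diag_proj_entry is_diagonal_def)
  qed
  then show ?thesis
    unfolding vec_eq_iff by blast
qed

lemma diag_proj_mult_entry:
  "(diag_proj B ** M) $ a $ c = (if a \<in> B then M $ a $ c else 0)"
proof -
  have "(diag_proj B ** M) $ a $ c = (\<Sum>k\<in>UNIV. if k = a then (if a \<in> B then M $ a $ c else 0) else 0)"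
    unfolding matrix_mult_entry by (rule sum.cong) (auto simp: diag_proj_entry)
  then show ?thesis
    by simp
qed

lemma mult_diag_proj_entry:
  "(M ** diag_proj B) $ a $ c = (if c \<in> B then M $ a $ c else 0)"
proof -
  have "(M ** diag_proj B) $ a $ c = (\<Sum>k\<in>UNIV. if k = c then (if c \<in> B then M $ a $ c else 0) else 0)"
    unfolding matrix_mult_entry by (rule sum.cong) (auto simp: diag_proj_entry)
  then show ?thesis
    by simp
qed

lemma supported_in_range:
  assumes "supported_in B P"
  shows "mat_range P \<subseteq> mat_range (diag_proj B)"
proof
  have PB: "diag_proj B ** P = P"
    using assms by (auto simp: vec_eq_iff diag_proj_mult_entry supported_in_def)
  fix w
  assume "w \<in> mat_range P"
  then obtain v where "w = P *v v"
    by (auto simp: mat_range_def)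
  then have "w = diag_proj B *v (P *v v)"
    by (simp add: matrix_vector_mul_assoc PB)
  then show "w \<in> mat_range (diag_proj B)"
    by (auto simp: mat_range_def)
qed

lemma matrix_vector_mult_axis_entry: "(A *v axis b 1) $ a = A $ a $ b"
  by (simp add: matrix_vector_mult_def axis_def if_distrib if_distribR cong: if_cong)

lemma supported_in_if_range:
  fixes P :: "complex^'n::finite^'n"
  assumes range: "mat_range P \<subseteq> mat_range (diag_proj B)" and herm: "cadjoint P = P"
  shows "supported_in B P"
proof -
  have row: "P $ a $ b = 0" if "a \<notin> B" for a b
  proof -
    obtain x where "P *v axis b 1 = diag_proj B *v x"
      using range by (auto simp: mat_range_def)
    then have "P $ a $ b = (diag_proj B *v x) $ a"
      by (simp flip: matrix_vector_mult_axis_entry)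
    also have "\<dots> = 0"
      using that by (simp add: matrix_vector_mult_def diag_proj_entry)
    finally show ?thesis .
  qed
  have "P $ a $ b = 0" if "b \<notin> B" for a b
    using row[OF that, of a] hermitian_entry_cnj[OF herm, of b a] by simp
  then show ?thesis
    using row unfolding supported_in_def by blast
qed

lemma commute_compressed_diag_iff:
  fixes X :: "complex^'n::finite^'n" and B :: "'n set" and h :: "'n \<Rightarrow> complex"
  defines "M \<equiv> diag_proj B ** diag_mat h ** diag_proj B"
  shows "X ** M = M ** X \<longleftrightarrow>
    (\<forall>a b. (if b \<in> B then X $ a $ b * h b else 0) = (if a \<in> B then h a * X $ a $ b else 0))"
proof -
  have M: "M $ a $ b = (if a = b \<and> a \<in> B then h a else 0)" for a b
    by (auto simp: M_def diag_proj_mult_entry mult_diag_proj_entry diag_mat_def)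
  have "(X ** M) $ a $ b = (\<Sum>c\<in>UNIV. if c = b then (if b \<in> B then X $ a $ b * h b else 0) else 0)"
    and "(M ** X) $ a $ b = (\<Sum>c\<in>UNIV. if c = a then (if a \<in> B then h a * X $ a $ b else 0) else 0)"
    for a b
    unfolding matrix_mult_entry by (rule sum.cong; auto simp: M)+
  then show ?thesis
    by (simp add: vec_eq_iff)
qed

lemma commute_compressed_lindblad_iff:
  fixes X :: "complex^'n::finite^'n" and B :: "'n set" and s :: "'n \<Rightarrow> 'n" and d
  assumes s: "s permutes UNIV"
  defines "M \<equiv> diag_proj B ** lindblad_op s d ** diag_proj B"
  shows "X ** M = M ** X \<longleftrightarrow>
    (\<forall>a b. (if b \<in> B \<and> s b \<in> B then X $ a $ s b * d b else 0)
         = (if a \<in> B \<and> inv s a \<in> B then d (inv s a) * X $ inv s a $ b else 0))"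
proof -
  have M: "M $ a $ b = (if a \<in> B \<and> b \<in> B \<and> a = s b then d b else 0)" for a b
    by (auto simp: M_def diag_proj_mult_entry mult_diag_proj_entry lindblad_op_def)
  have inv: "s (inv s a) = a" "inv s (s a) = a" for a
    using s by (simp_all add: permutes_inverses)
  have eq: "a = s c \<longleftrightarrow> c = inv s a" for a c
    using inv by metis
  have "(X ** M) $ a $ b
      = (\<Sum>c\<in>UNIV. if c = s b then (if b \<in> B \<and> s b \<in> B then X $ a $ s b * d b else 0) else 0)"
    and "(M ** X) $ a $ b
      = (\<Sum>c\<in>UNIV. if c = inv s a
          then (if a \<in> B \<and> inv s a \<in> B then d (inv s a) * X $ inv s a $ b else 0) else 0)"
    for a b
    unfolding matrix_mult_entry by (rule sum.cong; auto simp: M eq inv)+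
  then show ?thesis
    by (simp add: vec_eq_iff)
qed

section \<open>The coherence graph\<close>

definition coherence_matrix :: "('n \<times> 'n) set \<Rightarrow> ('n \<times> 'n \<Rightarrow> complex) \<Rightarrow> complex^'n::finite^'n" where
  "coherence_matrix C h = (\<chi> a b. if (a, b) \<in> C then h (a, b) else 0)"

lemma coherence_matrix_entry: "coherence_matrix C h $ a $ b = (if (a, b) \<in> C then h (a, b) else 0)"
  by (simp add: coherence_matrix_def)

lemma cadjoint_coherence_matrix:
  "cadjoint (coherence_matrix C h) = coherence_matrix (prod.swap ` C) (\<lambda>x. cnj (h (prod.swap x)))"
proof -
  have "(a, b) \<in> prod.swap ` C \<longleftrightarrow> (b, a) \<in> C" for a b
    by force
  then show ?thesis
    by (simp add: vec_eq_iff cadjoint_entry coherence_matrix_entry)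
qed

lemma coh_edge_swap:
  assumes "sym R"
  shows "coh_edge N \<sigma> D R (prod.swap x) \<alpha> (prod.swap y) \<longleftrightarrow> coh_edge N \<sigma> D R x \<alpha> y"
  using assms unfolding coh_edge_def coh_vertices_def sym_def by auto

lemma coh_adj_swap:
  assumes "sym R"
  shows "coh_adj N \<sigma> D R (prod.swap x) (prod.swap y) \<longleftrightarrow> coh_adj N \<sigma> D R x y"
  unfolding coh_adj_def using coh_edge_swap[OF assms] by blast

lemma coh_weight_swap: "coh_weight D \<alpha> (prod.swap x) = cnj (coh_weight D \<alpha> x)"
  by (simp add: coh_weight_def mult.commute)

lemma coh_weight_norm: "D \<alpha> a \<noteq> 0 \<Longrightarrow> D \<alpha> b \<noteq> 0 \<Longrightarrow> cmod (coh_weight D \<alpha> (a, b)) = 1"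
  by (simp add: coh_weight_def norm_mult norm_divide)

lemma coh_weight_mult:
  assumes "cmod (D \<alpha> a) = cmod (D \<alpha> b)" and "D \<alpha> b \<noteq> 0"
  shows "coh_weight D \<alpha> (a, b) * D \<alpha> b = D \<alpha> a"
proof -
  have "coh_weight D \<alpha> (a, b) * D \<alpha> b
      = D \<alpha> a * (D \<alpha> b * cnj (D \<alpha> b)) / complex_of_real ((cmod (D \<alpha> b))\<^sup>2)"
    using assms(1) by (simp add: coh_weight_def power2_eq_square mult_ac)
  also have "\<dots> = D \<alpha> a"
    using assms(2) by (simp flip: complex_norm_square)
  finally show ?thesis .
qed

lemma coh_edge_change_rel:
  "coh_edge N \<sigma> D R x \<alpha> y \<Longrightarrow> x \<in> coh_vertices R' \<Longrightarrow> y \<in> coh_vertices R'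
    \<Longrightarrow> coh_edge N \<sigma> D R' x \<alpha> y"
  by (simp add: coh_edge_def)

definition phase_compatible ::
  "nat \<Rightarrow> (nat \<Rightarrow> 'n \<Rightarrow> 'n) \<Rightarrow> (nat \<Rightarrow> 'n \<Rightarrow> complex) \<Rightarrow> ('n \<times> 'n) set
    \<Rightarrow> ('n \<times> 'n) set \<Rightarrow> ('n \<times> 'n \<Rightarrow> complex) \<Rightarrow> bool" where
  "phase_compatible N \<sigma> D R C h \<longleftrightarrow> C \<subseteq> coh_vertices R
     \<and> (\<forall>x y. x \<in> C \<longrightarrow> coh_adj N \<sigma> D R x y \<longrightarrow> y \<in> C)
     \<and> (\<forall>x \<alpha> y. x \<in> C \<longrightarrow> coh_edge N \<sigma> D R x \<alpha> y \<longrightarrow> h y = coh_weight D \<alpha> x * h x)"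

lemma phase_compatible_swap:
  assumes "sym R" and "phase_compatible N \<sigma> D R C h"
  shows "phase_compatible N \<sigma> D R (prod.swap ` C) (\<lambda>x. cnj (h (prod.swap x)))"
  unfolding phase_compatible_def
proof (intro conjI allI impI)
  show "prod.swap ` C \<subseteq> coh_vertices R"
    using assms by (auto simp: phase_compatible_def coh_vertices_def dest: symD)
  show "y \<in> prod.swap ` C" if "x \<in> prod.swap ` C" "coh_adj N \<sigma> D R x y" for x y
  proof -
    have "prod.swap x \<in> C" "coh_adj N \<sigma> D R (prod.swap x) (prod.swap y)"
      using that coh_adj_swap[OF assms(1)] by auto
    then have "prod.swap y \<in> C"
      using assms(2) unfolding phase_compatible_def by blast
    then show ?thesis
      by (metis image_eqI swap_swap)
  qed
  show "cnj (h (prod.swap y)) = coh_weight D \<alpha> x * cnj (h (prod.swap x))"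
    if "x \<in> prod.swap ` C" "coh_edge N \<sigma> D R x \<alpha> y" for x \<alpha> y
  proof -
    have "prod.swap x \<in> C" "coh_edge N \<sigma> D R (prod.swap x) \<alpha> (prod.swap y)"
      using that coh_edge_swap[OF assms(1)] by auto
    then have "h (prod.swap y) = coh_weight D \<alpha> (prod.swap x) * h (prod.swap x)"
      using assms(2) unfolding phase_compatible_def by blast
    then show ?thesis
      by (simp add: coh_weight_swap)
  qed
qed

text \<open>The phase of a vertex \<open>x\<close> is \<open>f x\<^sub>0 x\<close>, for the resonance function \<open>f\<close> and a fixed vertex
  \<open>x\<^sub>0\<close> of the component.\<close>
lemma resonant_component_phase:
  assumes comp: "coh_component N \<sigma> D R C" and res: "resonant N \<sigma> D R C"
  obtains x0 h where "x0 \<in> C" and "h x0 \<noteq> 0" and "phase_compatible N \<sigma> D R C h"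
proof -
  obtain x0 where x0: "x0 \<in> coh_vertices R" and C_def: "C = {y. (coh_adj N \<sigma> D R)\<^sup>*\<^sup>* x0 y}"
    using comp unfolding coh_component_def by blast
  obtain f where f_norm: "\<forall>x\<in>C. \<forall>y\<in>C. cmod (f x y) = 1"
    and f_trans: "\<forall>x\<in>C. \<forall>y\<in>C. \<forall>z\<in>C. f x y * f y z = f x z"
    and f_edge: "\<forall>x y \<alpha>. x \<in> C \<longrightarrow> y \<in> C \<longrightarrow> coh_edge N \<sigma> D R x \<alpha> y \<longrightarrow> f x y = coh_weight D \<alpha> x"
    using res unfolding resonant_def by blast
  have x0C: "x0 \<in> C"
    by (simp add: C_def)
  have closed: "y \<in> C" if "x \<in> C" "coh_adj N \<sigma> D R x y" for x y
    using that by (simp add: C_def)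
  have "C \<subseteq> coh_vertices R"
  proof
    fix y
    assume "y \<in> C"
    then have "(coh_adj N \<sigma> D R)\<^sup>*\<^sup>* x0 y"
      by (simp add: C_def)
    then show "y \<in> coh_vertices R"
      by (induction rule: rtranclp_induct) (use x0 in \<open>auto simp: coh_adj_def coh_edge_def\<close>)
  qed
  moreover have "f x0 y = coh_weight D \<alpha> x * f x0 x" if "x \<in> C" "coh_edge N \<sigma> D R x \<alpha> y" for x \<alpha> y
  proof -
    have "y \<in> C"
      using closed[OF that(1)] that(2) unfolding coh_adj_def by blast
    then have "f x0 x * f x y = f x0 y" and "f x y = coh_weight D \<alpha> x"
      using f_trans f_edge that x0C by blast+
    then show ?thesis
      by (simp add: mult.commute)
  qed
  ultimately have "phase_compatible N \<sigma> D R C (f x0)"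
    using closed by (simp add: phase_compatible_def)
  moreover have "f x0 x0 \<noteq> 0"
    using f_norm x0C by fastforce
  ultimately show ?thesis
    using that x0C by blast
qed

section \<open>Lindblad systems with permutation structure\<close>

lemma funpow_inv_orbit:
  assumes "bij s" and "(s ^^ m) x = x" and "i \<le> m"
  shows "(inv s ^^ i) x = (s ^^ (m - i)) x"
proof -
  have "(s ^^ i) ((s ^^ (m - i)) x) = (s ^^ (i + (m - i))) x"
    by (simp add: funpow_add)
  also have "\<dots> = x"
    using assms(2,3) by simp
  finally have "(inv s ^^ i) x = (inv s ^^ i) ((s ^^ i) ((s ^^ (m - i)) x))"
    by simp
  also have "\<dots> = (s ^^ (m - i)) x"
    using inv_fn_o_fn_is_id[OF assms(1), of i] by (simp add: fun_eq_iff)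
  finally show ?thesis .
qed

lemma trancl_transport:
  assumes step: "\<And>a b. (a, b) \<in> r \<Longrightarrow> Q a \<Longrightarrow> Q b \<and> (f a, f b) \<in> r"
  shows "(a, b) \<in> r\<^sup>+ \<Longrightarrow> Q a \<Longrightarrow> Q b \<and> (f a, f b) \<in> r\<^sup>+"
proof (induction rule: trancl_induct)
  case (base b)
  then show ?case
    using step by blast
next
  case (step b c)
  then show ?case
    using assms by (blast intro: trancl_into_trancl)
qed

locale perm_lindblad =
  fixes N :: nat and \<sigma> :: "nat \<Rightarrow> 'n::finite \<Rightarrow> 'n" and D :: "nat \<Rightarrow> 'n \<Rightarrow> complex"
  assumes permutes: "\<forall>\<alpha><N. \<sigma> \<alpha> permutes UNIV"
    and one_inactive_per_cycle:
      "\<forall>\<alpha><N. \<forall>j k. D \<alpha> j = 0 \<and> D \<alpha> k = 0 \<and> (\<exists>m. (\<sigma> \<alpha> ^^ m) j = k) \<longrightarrow> j = k"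
begin

abbreviation B :: "'n set" where
  "B \<equiv> basin_union N \<sigma> D"

abbreviation E :: "'n \<Rightarrow> 'n \<Rightarrow> bool" where
  "E \<equiv> omega_edge N \<sigma> D"

abbreviation compressed_hamiltonian :: "('n \<Rightarrow> real) \<Rightarrow> complex^'n^'n" where
  "compressed_hamiltonian Hd \<equiv> diag_proj B ** diag_mat (\<lambda>j. complex_of_real (Hd j)) ** diag_proj B"

abbreviation compressed_lindblad :: "nat \<Rightarrow> complex^'n^'n" where
  "compressed_lindblad \<alpha> \<equiv> diag_proj B ** lindblad_op (\<sigma> \<alpha>) (D \<alpha>) ** diag_proj B"

lemma sigma_permutes: "\<alpha> < N \<Longrightarrow> \<sigma> \<alpha> permutes UNIV"
  using permutes by blast

lemma inv_sigma_sigma [simp]: "\<alpha> < N \<Longrightarrow> inv (\<sigma> \<alpha>) (\<sigma> \<alpha> x) = x"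
  by (meson sigma_permutes permutes_inverses(2))

lemma sigma_inv_sigma [simp]: "\<alpha> < N \<Longrightarrow> \<sigma> \<alpha> (inv (\<sigma> \<alpha>) x) = x"
  by (meson sigma_permutes permutes_inverses(1))

lemma sigma_eq_iff [simp]: "\<alpha> < N \<Longrightarrow> \<sigma> \<alpha> x = \<sigma> \<alpha> y \<longleftrightarrow> x = y"
  by (metis inv_sigma_sigma)

lemma omega_edge_iff: "E k j \<longleftrightarrow> j \<noteq> k \<and> (\<exists>\<alpha><N. \<sigma> \<alpha> k = j \<and> D \<alpha> k \<noteq> 0)"
proof -
  have "omega_weight N \<sigma> D j k = 0 \<longleftrightarrow> (\<forall>\<alpha>\<in>{\<alpha>. \<alpha> < N \<and> \<sigma> \<alpha> k = j}. (cmod (D \<alpha> k))\<^sup>2 = 0)"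
    unfolding omega_weight_def by (rule sum_nonneg_eq_0_iff) auto
  then show ?thesis
    unfolding omega_edge_def by auto
qed

lemma basins_disjoint: "disjoint (basins N \<sigma> D)"
proof (rule disjointI)
  fix C1 C2
  assume "C1 \<in> basins N \<sigma> D" "C2 \<in> basins N \<sigma> D" "C1 \<noteq> C2"
  then obtain k1 k2 where "C1 = omega_scc N \<sigma> D k1" "C2 = omega_scc N \<sigma> D k2"
    by (auto simp: basins_def is_basin_def)
  with \<open>C1 \<noteq> C2\<close> show "C1 \<inter> C2 = {}"
    unfolding omega_scc_def by (auto intro: rtranclp_trans)
qed

lemma basin_proj_eq: "basin_proj N \<sigma> D = diag_proj B"
  unfolding basin_proj_def basin_union_def
  by (rule sum_diag_proj_disjoint[OF finite basins_disjoint])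

lemma basin_step:
  assumes "C \<in> basins N \<sigma> D" "j \<in> C" "\<alpha> < N" "D \<alpha> j \<noteq> 0"
  shows "\<sigma> \<alpha> j \<in> C"
proof (cases "\<sigma> \<alpha> j = j")
  case False
  then have "E j (\<sigma> \<alpha> j)"
    using assms(3,4) omega_edge_iff by blast
  then show ?thesis
    using assms(1,2) unfolding basins_def is_basin_def by blast
qed (use assms(2) in simp)

lemma basin_union_step: "j \<in> B \<Longrightarrow> \<alpha> < N \<Longrightarrow> D \<alpha> j \<noteq> 0 \<Longrightarrow> \<sigma> \<alpha> j \<in> B"
  using basin_step unfolding basin_union_def by blast

lemma basin_strongly_connected:
  "C \<in> basins N \<sigma> D \<Longrightarrow> x \<in> C \<Longrightarrow> y \<in> C \<Longrightarrow> E\<^sup>*\<^sup>* x y"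
  unfolding basins_def is_basin_def omega_scc_def by (blast intro: rtranclp_trans)

lemma hidden_enclosure_if_hermitian_commutant:
  assumes herm: "cadjoint Y = Y" and nondiag: "\<not> is_diagonal Y" and supp: "supported_in B Y"
    and comm_H: "Y ** compressed_hamiltonian Hd = compressed_hamiltonian Hd ** Y"
    and comm_L: "\<And>\<alpha>. \<alpha> < N \<Longrightarrow> Y ** compressed_lindblad \<alpha> = compressed_lindblad \<alpha> ** Y"
  shows "has_hidden_enclosure N \<sigma> D Hd"
proof -
  obtain t where t: "orth_projector (mat_poly t Y)" "\<not> is_diagonal (mat_poly t Y)"
    using hermitian_non_diagonal_projector[OF herm nondiag] by blast
  define P where "P = (if poly t 0 = 0 then mat_poly t Y else mat 1 - mat_poly t Y)"
  have "orth_projector P"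
    by (simp add: P_def t(1) orth_projector_complement)
  moreover have "\<not> (\<exists>S\<subseteq>basins N \<sigma> D. P = (\<Sum>C\<in>S. diag_proj C))"
  proof -
    have "\<not> is_diagonal P"
      using t(2) by (auto simp: P_def is_diagonal_def mat_entry)
    then show ?thesis
      using is_diagonal_sum_diag_proj by metis
  qed
  moreover have "mat_range P \<subseteq> mat_range (diag_proj B)"
    using supported_in_range[OF supported_poly_projector[OF supp t(1)]] unfolding P_def .
  moreover have comm: "P ** M = M ** P" if "Y ** M = M ** Y" for M
  proof -
    have "mat_poly t Y ** M = M ** mat_poly t Y"
      using mat_poly_commute[OF that[symmetric]] by simp
    then show ?thesis
      by (simp add: P_def matrix_diff_ldistrib matrix_diff_rdistrib)
  qed
  ultimately show ?thesis
    unfolding has_hidden_enclosure_def Let_def basin_proj_eq mat_commute_def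
    using comm[OF comm_H] comm[OF comm_L] by (intro exI[of _ P]) blast
qed

definition has_active_pred :: "nat \<Rightarrow> 'n \<Rightarrow> bool" where
  "has_active_pred \<alpha> x \<longleftrightarrow> inv (\<sigma> \<alpha>) x \<in> B \<and> D \<alpha> (inv (\<sigma> \<alpha>) x) \<noteq> 0"

text \<open>The points of the \<open>\<sigma> \<alpha>\<close>-cycle after an inactive \<open>j\<close> are active, since the cycle contains
  no other inactive point; hence they stay in \<open>B\<close> once \<open>\<sigma> \<alpha> j\<close> does.\<close>
lemma inactive_cycle:
  assumes \<alpha>: "\<alpha> < N" and j: "D \<alpha> j = 0" and sj: "\<sigma> \<alpha> j \<in> B"
    and l: "0 < l" "l < least_power (\<sigma> \<alpha>) j"
  shows "D \<alpha> ((\<sigma> \<alpha> ^^ l) j) \<noteq> 0 \<and> (\<sigma> \<alpha> ^^ l) j \<in> B"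
proof -
  let ?s = "\<sigma> \<alpha>"
  have active: "D \<alpha> ((?s ^^ l) j) \<noteq> 0" if "0 < l" "l < least_power ?s j" for l
  proof
    assume "D \<alpha> ((?s ^^ l) j) = 0"
    with j have "j = (?s ^^ l) j"
      using one_inactive_per_cycle \<alpha> by blast
    then have "least_power ?s j \<le> l"
      using least_power_le[where f = ?s and n = l and x = j] that(1) by argo
    then show False
      using that(2) by simp
  qed
  moreover have "(?s ^^ l) j \<in> B" if "0 < l" "l < least_power ?s j" for l
    using that
  proof (induction l)
    case (Suc l)
    show ?case
    proof (cases "l = 0")
      case False
      then show ?thesis
        using Suc active basin_union_step[OF _ \<alpha>] by simp
    qed (use sj in simp)
  qed simp
  ultimately show ?thesis
    using l by blast
qed

lemma inactive_backward_orbit: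
  assumes \<alpha>: "\<alpha> < N" and j: "D \<alpha> j = 0" and sj: "\<sigma> \<alpha> j \<in> B"
  obtains t where "\<forall>i<t. has_active_pred \<alpha> ((inv (\<sigma> \<alpha>) ^^ i) j)"
    and "\<not> has_active_pred \<alpha> ((inv (\<sigma> \<alpha>) ^^ t) j)" and "(inv (\<sigma> \<alpha>) ^^ t) j = \<sigma> \<alpha> j"
proof -
  let ?s = "\<sigma> \<alpha>"
  define m where "m = least_power ?s j"
  have "permutation ?s"
    by (rule permutes_imp_permutation[OF finite sigma_permutes[OF \<alpha>]])
  then have m: "(?s ^^ m) j = j" "0 < m"
    unfolding m_def by (rule least_power_of_permutation)+
  have backward: "(inv ?s ^^ i) j = (?s ^^ (m - i)) j" if "i \<le> m" for i
    using funpow_inv_orbit[OF permutes_bij[OF sigma_permutes[OF \<alpha>]] m(1) that] .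
  show ?thesis
  proof
    show "\<forall>i<m - 1. has_active_pred \<alpha> ((inv ?s ^^ i) j)"
    proof (intro allI impI)
      fix i
      assume "i < m - 1"
      then have "inv ?s ((inv ?s ^^ i) j) = (?s ^^ (m - Suc i)) j" "0 < m - Suc i" "m - Suc i < m"
        using backward[of "Suc i"] by auto
      then show "has_active_pred \<alpha> ((inv ?s ^^ i) j)"
        unfolding has_active_pred_def using inactive_cycle[OF \<alpha> j sj] by (simp add: m_def)
    qed
    have "inv ?s ((inv ?s ^^ (m - 1)) j) = (inv ?s ^^ m) j"
      using m(2) by (metis Suc_diff_1 funpow.simps(2) o_apply)
    also have "\<dots> = j"
      using backward[of m] by simp
    finally show "\<not> has_active_pred \<alpha> ((inv ?s ^^ (m - 1)) j)"
      unfolding has_active_pred_def using j by simp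
    show "(inv ?s ^^ (m - 1)) j = ?s j"
      using backward[of "m - 1"] m(2) by simp
  qed
qed

lemma union_of_basins_if_closed:
  assumes "Q \<subseteq> B" and closed: "\<And>j y. j \<in> Q \<Longrightarrow> E j y \<Longrightarrow> y \<in> Q"
  shows "Q = \<Union>{C \<in> basins N \<sigma> D. C \<subseteq> Q}"
proof
  have reach: "y \<in> Q" if "E\<^sup>*\<^sup>* j y" "j \<in> Q" for j y
    using that by (induction rule: rtranclp_induct) (auto intro: closed)
  show "Q \<subseteq> \<Union>{C \<in> basins N \<sigma> D. C \<subseteq> Q}"
  proof
    fix j
    assume "j \<in> Q"
    then obtain C where "C \<in> basins N \<sigma> D" "j \<in> C"
      using assms(1) by (auto simp: basin_union_def)
    moreover have "C \<subseteq> Q"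
      using basin_strongly_connected[OF calculation] reach \<open>j \<in> Q\<close> by blast
    ultimately show "j \<in> \<Union>{C \<in> basins N \<sigma> D. C \<subseteq> Q}"
      by blast
  qed
qed blast


lemma diag_proj_eq_sum_basins:
  assumes "Q \<subseteq> B" and "\<And>j y. j \<in> Q \<Longrightarrow> E j y \<Longrightarrow> y \<in> Q"
  shows "diag_proj Q = (\<Sum>C\<in>{C \<in> basins N \<sigma> D. C \<subseteq> Q}. diag_proj C)"
proof -
  let ?S = "{C \<in> basins N \<sigma> D. C \<subseteq> Q}"
  have "disjoint ?S"
    by (rule pairwise_subset[OF basins_disjoint]) blast
  then have "(\<Sum>C\<in>?S. diag_proj C) = diag_proj (\<Union>?S)"
    by (rule sum_diag_proj_disjoint[OF finite])
  also have "\<Union>?S = Q"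
    by (rule union_of_basins_if_closed[OF assms, symmetric])
  finally show ?thesis
    by (rule sym)
qed
end

section \<open>From symmetry and resonance to a hidden enclosure\<close>

locale lindblad_symmetry = perm_lindblad N \<sigma> D for N and \<sigma> :: "nat \<Rightarrow> 'n::finite \<Rightarrow> 'n" and D +
  fixes Hd :: "'n \<Rightarrow> real" and Ns :: "'n set" and R :: "('n \<times> 'n) set" and \<nu> :: nat
  assumes Ns_basins: "Ns \<subseteq> B" and uniform: "uniform_equiv Ns R \<nu>" and nu: "\<nu> \<ge> 2"
    and hamiltonian_symmetry: "\<forall>(j, k)\<in>R. Hd j = Hd k"
    and dissipation_symmetry: "\<forall>\<alpha><N. \<forall>(j, k)\<in>R. cmod (D \<alpha> j) = cmod (D \<alpha> k)
            \<and> (\<sigma> \<alpha> j \<in> B \<and> \<sigma> \<alpha> k \<in> B \<longrightarrow> (\<sigma> \<alpha> j, \<sigma> \<alpha> k) \<in> R)"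
begin

lemma equiv_R: "equiv Ns R"
  using uniform by (simp add: uniform_equiv_def)

lemma R_field: "(a, b) \<in> R \<Longrightarrow> a \<in> Ns \<and> b \<in> Ns"
  using equiv_R unfolding equiv_def refl_on_def by blast

lemma sym_R: "sym R"
  using equiv_R by (simp add: equiv_def)

lemma R_cmod_eq: "(j, k) \<in> R \<Longrightarrow> \<alpha> < N \<Longrightarrow> cmod (D \<alpha> j) = cmod (D \<alpha> k)"
  using dissipation_symmetry by blast

lemma R_sigma: "(j, k) \<in> R \<Longrightarrow> \<alpha> < N \<Longrightarrow> \<sigma> \<alpha> j \<in> B \<Longrightarrow> \<sigma> \<alpha> k \<in> B \<Longrightarrow> (\<sigma> \<alpha> j, \<sigma> \<alpha> k) \<in> R"
  using dissipation_symmetry by blast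

lemma R_class_card: "a \<in> Ns \<Longrightarrow> card (R `` {a}) = \<nu>"
  using uniform unfolding uniform_equiv_def by (simp add: quotientI)

lemma Ns_step:
  assumes "z \<in> Ns" "\<alpha> < N" "D \<alpha> z \<noteq> 0"
  shows "\<sigma> \<alpha> z \<in> Ns"
proof -
  have "(z, z) \<in> R"
    using equiv_R assms(1) by (auto simp: equiv_def refl_on_def)
  moreover have "\<sigma> \<alpha> z \<in> B"
    using basin_union_step assms Ns_basins by blast
  ultimately have "(\<sigma> \<alpha> z, \<sigma> \<alpha> z) \<in> R"
    using R_sigma assms(2) by blast
  then show ?thesis
    using R_field by blast
qed

lemma Ns_reachable: "E\<^sup>*\<^sup>* z w \<Longrightarrow> z \<in> Ns \<Longrightarrow> w \<in> Ns"
proof (induction rule: rtranclp_induct)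
  case (step y w)
  then obtain \<alpha> where "\<alpha> < N" "\<sigma> \<alpha> y = w" "D \<alpha> y \<noteq> 0"
    using omega_edge_iff by blast
  then show ?case
    using Ns_step step.IH step.prems by blast
qed

text \<open>Basins are strongly connected, so a point of \<open>B\<close> is reachable from its active image.\<close>
lemma Ns_step_back:
  assumes "y \<in> B" "\<alpha> < N" "D \<alpha> y \<noteq> 0" "\<sigma> \<alpha> y \<in> Ns"
  shows "y \<in> Ns"
proof -
  obtain C where C: "C \<in> basins N \<sigma> D" "y \<in> C"
    using assms(1) by (auto simp: basin_union_def)
  then have "\<sigma> \<alpha> y \<in> C"
    using basin_step assms(2,3) by blast
  then have "E\<^sup>*\<^sup>* (\<sigma> \<alpha> y) y"
    using basin_strongly_connected C by blast
  then show ?thesis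
    using Ns_reachable assms(4) by blast
qed

lemma sigma_class_onto:
  assumes y: "y \<in> Ns" and \<alpha>: "\<alpha> < N" and d: "D \<alpha> y \<noteq> 0" and x: "(x, \<sigma> \<alpha> y) \<in> R"
  shows "(inv (\<sigma> \<alpha>) x, y) \<in> R"
proof -
  let ?cy = "R `` {y}" and ?cs = "R `` {\<sigma> \<alpha> y}"
  have "\<sigma> \<alpha> ` ?cy \<subseteq> ?cs"
  proof
    fix w
    assume "w \<in> \<sigma> \<alpha> ` ?cy"
    then obtain u where u: "(y, u) \<in> R" "w = \<sigma> \<alpha> u"
      by auto
    then have "u \<in> Ns" "D \<alpha> u \<noteq> 0"
      using R_field R_cmod_eq[OF u(1) \<alpha>] d by auto
    then show "w \<in> ?cs"
      using u R_sigma[OF u(1) \<alpha>] basin_union_step \<alpha> d y Ns_basins by auto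
  qed
  moreover have "card (\<sigma> \<alpha> ` ?cy) = card ?cs"
    using R_class_card y Ns_step[OF y \<alpha> d] by (simp add: card_image inj_on_def \<alpha>)
  ultimately have "\<sigma> \<alpha> ` ?cy = ?cs"
    by (simp add: card_subset_eq)
  moreover have "x \<in> ?cs"
    using x sym_R by (auto dest: symD)
  ultimately obtain u where "(y, u) \<in> R" "x = \<sigma> \<alpha> u"
    by auto
  then show ?thesis
    using sym_R \<alpha> by (auto dest: symD)
qed

lemma coh_edge_forward:
  assumes "(u, b) \<in> coh_vertices R" "\<alpha> < N" "D \<alpha> u \<noteq> 0"
  shows "coh_edge N \<sigma> D R (u, b) \<alpha> (\<sigma> \<alpha> u, \<sigma> \<alpha> b)"
proof -
  have R: "(u, b) \<in> R" "u \<noteq> b"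
    using assms(1) by (auto simp: coh_vertices_def)
  then have "D \<alpha> b \<noteq> 0" "u \<in> B" "b \<in> B"
    using R_cmod_eq[OF R(1) assms(2)] assms(3) R_field Ns_basins by auto
  then have "(\<sigma> \<alpha> u, \<sigma> \<alpha> b) \<in> R"
    using R_sigma[OF R(1) assms(2)] basin_union_step assms(2,3) by blast
  then show ?thesis
    using assms R \<open>D \<alpha> b \<noteq> 0\<close> by (simp add: coh_edge_def coh_vertices_def)
qed

lemma coh_edge_backward:
  assumes "(a, \<sigma> \<alpha> b) \<in> coh_vertices R" "\<alpha> < N" "b \<in> B" "D \<alpha> b \<noteq> 0"
  shows "coh_edge N \<sigma> D R (inv (\<sigma> \<alpha>) a, b) \<alpha> (a, \<sigma> \<alpha> b)"
proof -
  have R: "(a, \<sigma> \<alpha> b) \<in> R" "a \<noteq> \<sigma> \<alpha> b"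
    using assms(1) by (auto simp: coh_vertices_def)
  then have "b \<in> Ns"
    using Ns_step_back[OF assms(3,2,4)] R_field by blast
  then have uR: "(inv (\<sigma> \<alpha>) a, b) \<in> R"
    using sigma_class_onto assms(2,4) R(1) by blast
  moreover have "inv (\<sigma> \<alpha>) a \<noteq> b"
    using R(2) assms(2) by auto
  moreover have "D \<alpha> (inv (\<sigma> \<alpha>) a) \<noteq> 0"
    using R_cmod_eq[OF uR assms(2)] assms(4) by auto
  ultimately show ?thesis
    using assms R by (simp add: coh_edge_def coh_vertices_def)
qed

lemma phase_compatible_basins:
  "phase_compatible N \<sigma> D R C h \<Longrightarrow> (x, y) \<in> C \<Longrightarrow> x \<in> B \<and> y \<in> B"
  using R_field Ns_basins by (auto simp: phase_compatible_def coh_vertices_def)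

lemma coherence_matrix_supported:
  "phase_compatible N \<sigma> D R C h \<Longrightarrow> supported_in B (coherence_matrix C h)"
  using phase_compatible_basins
  by (fastforce simp: supported_in_def coherence_matrix_entry split: if_splits)

lemma coherence_matrix_commute_hamiltonian:
  assumes "phase_compatible N \<sigma> D R C h"
  shows "coherence_matrix C h ** compressed_hamiltonian Hd
       = compressed_hamiltonian Hd ** coherence_matrix C h"
  unfolding commute_compressed_diag_iff
proof (intro allI)
  fix a b
  show "(if b \<in> B then coherence_matrix C h $ a $ b * complex_of_real (Hd b) else 0)
      = (if a \<in> B then complex_of_real (Hd a) * coherence_matrix C h $ a $ b else 0)"
  proof (cases "(a, b) \<in> C")
    case True
    then have "(a, b) \<in> R"
      using assms by (auto simp: phase_compatible_def coh_vertices_def)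
    then have "Hd a = Hd b"
      using hamiltonian_symmetry by auto
    with True show ?thesis
      using phase_compatible_basins[OF assms] by (simp add: mult.commute)
  qed (simp add: coherence_matrix_entry)
qed

text \<open>The entries \<open>(\<sigma>\<^sup>-\<^sup>1 a, b)\<close> and \<open>(a, \<sigma> b)\<close> that \<open>P\<^sub>B L P\<^sub>B\<close> relates are joined by an edge of the
  coherence graph whenever one of them can contribute.\<close>
lemma phase_compatible_lindblad_edge:
  assumes phase: "phase_compatible N \<sigma> D R C h" and \<alpha>: "\<alpha> < N"
    and "(inv (\<sigma> \<alpha>) a, b) \<in> C \<and> D \<alpha> (inv (\<sigma> \<alpha>) a) \<noteq> 0 \<or> (a, \<sigma> \<alpha> b) \<in> C \<and> b \<in> B \<and> D \<alpha> b \<noteq> 0"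
  shows "(inv (\<sigma> \<alpha>) a, b) \<in> C \<and> (a, \<sigma> \<alpha> b) \<in> C
    \<and> coh_edge N \<sigma> D R (inv (\<sigma> \<alpha>) a, b) \<alpha> (a, \<sigma> \<alpha> b)"
proof -
  let ?u = "inv (\<sigma> \<alpha>) a"
  have C: "C \<subseteq> coh_vertices R"
    and closed: "\<And>x y. x \<in> C \<Longrightarrow> coh_adj N \<sigma> D R x y \<Longrightarrow> y \<in> C"
    using phase unfolding phase_compatible_def by blast+
  have e: "coh_edge N \<sigma> D R (?u, b) \<alpha> (a, \<sigma> \<alpha> b)"
    using assms(3)
  proof
    assume "(?u, b) \<in> C \<and> D \<alpha> ?u \<noteq> 0"
    then show ?thesis
      using coh_edge_forward[of ?u b \<alpha>] C \<alpha> by auto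
  next
    assume "(a, \<sigma> \<alpha> b) \<in> C \<and> b \<in> B \<and> D \<alpha> b \<noteq> 0"
    then show ?thesis
      using coh_edge_backward[of a \<alpha> b] C \<alpha> by auto
  qed
  then have "(?u, b) \<in> C \<longleftrightarrow> (a, \<sigma> \<alpha> b) \<in> C"
    using closed unfolding coh_adj_def by blast
  with assms(3) e show ?thesis
    by blast
qed

lemma coherence_matrix_commute_lindblad:
  assumes phase: "phase_compatible N \<sigma> D R C h" and \<alpha>: "\<alpha> < N"
  shows "coherence_matrix C h ** compressed_lindblad \<alpha> = compressed_lindblad \<alpha> ** coherence_matrix C h"
  unfolding commute_compressed_lindblad_iff[OF sigma_permutes[OF \<alpha>]]
proof (intro allI)
  fix a b
  let ?s = "\<sigma> \<alpha>" and ?u = "inv (\<sigma> \<alpha>) a" and ?X = "coherence_matrix C h"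
  show "(if b \<in> B \<and> ?s b \<in> B then ?X $ a $ ?s b * D \<alpha> b else 0)
      = (if a \<in> B \<and> ?u \<in> B then D \<alpha> ?u * ?X $ ?u $ b else 0)"
  proof (cases "(?u, b) \<in> C \<and> D \<alpha> ?u \<noteq> 0 \<or> (a, ?s b) \<in> C \<and> b \<in> B \<and> D \<alpha> b \<noteq> 0")
    case True
    then have uC: "(?u, b) \<in> C" and aC: "(a, ?s b) \<in> C"
      and e: "coh_edge N \<sigma> D R (?u, b) \<alpha> (a, ?s b)"
      using phase_compatible_lindblad_edge[OF phase \<alpha>] by blast+
    have "cmod (D \<alpha> ?u) = cmod (D \<alpha> b)" "D \<alpha> b \<noteq> 0"
      using e by (auto simp: coh_edge_def coh_vertices_def intro: R_cmod_eq)
    then have weight: "coh_weight D \<alpha> (?u, b) * D \<alpha> b = D \<alpha> ?u"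
      by (rule coh_weight_mult)
    have "h (a, ?s b) = coh_weight D \<alpha> (?u, b) * h (?u, b)"
      using phase uC e unfolding phase_compatible_def by blast
    then have "h (a, ?s b) * D \<alpha> b = h (?u, b) * (coh_weight D \<alpha> (?u, b) * D \<alpha> b)"
      by (simp add: mult_ac)
    also have "\<dots> = D \<alpha> ?u * h (?u, b)"
      unfolding weight by (rule mult.commute)
    finally show ?thesis
      using uC aC phase_compatible_basins[OF phase] by (simp add: coherence_matrix_entry)
  next
    case False
    then show ?thesis
      by (auto simp: coherence_matrix_entry)
  qed
qed

lemma hidden_enclosure_if_resonant_component:
  assumes "coh_component N \<sigma> D R C" and "resonant N \<sigma> D R C"
  shows "has_hidden_enclosure N \<sigma> D Hd"
proof -
  obtain x0 h where x0: "x0 \<in> C" "h x0 \<noteq> 0" and phase: "phase_compatible N \<sigma> D R C h"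
    using resonant_component_phase[OF assms] .
  let ?C' = "prod.swap ` C" and ?h' = "\<lambda>x. cnj (h (prod.swap x))"
  have phase': "phase_compatible N \<sigma> D R ?C' ?h'"
    by (rule phase_compatible_swap[OF sym_R phase])
  define X where "X = coherence_matrix C h"
  have X_adj: "cadjoint X = coherence_matrix ?C' ?h'"
    by (simp add: X_def cadjoint_coherence_matrix)
  have "x0 \<in> coh_vertices R"
    using x0(1) phase by (auto simp: phase_compatible_def)
  then have "\<not> is_diagonal X"
    using x0 by (auto simp: is_diagonal_def X_def coherence_matrix_entry coh_vertices_def)
  then obtain Y where Y: "cadjoint Y = Y" "\<not> is_diagonal Y"
    and Y_comm: "\<forall>M. X ** M = M ** X \<and> cadjoint X ** M = M ** cadjoint X \<longrightarrow> Y ** M = M ** Y"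
    and Y_supp: "\<forall>B. supported_in B X \<longrightarrow> supported_in B Y"
    by (rule hermitian_part_non_diagonal)
  have comm: "Y ** M = M ** Y" if "X ** M = M ** X" "cadjoint X ** M = M ** cadjoint X" for M
    using Y_comm that by blast
  show ?thesis
  proof (rule hidden_enclosure_if_hermitian_commutant[OF Y])
    show "supported_in B Y"
      using Y_supp coherence_matrix_supported[OF phase] by (simp add: X_def)
    show "Y ** compressed_hamiltonian Hd = compressed_hamiltonian Hd ** Y"
    proof (rule comm)
      show "X ** compressed_hamiltonian Hd = compressed_hamiltonian Hd ** X"
        unfolding X_def by (rule coherence_matrix_commute_hamiltonian[OF phase])
      show "cadjoint X ** compressed_hamiltonian Hd = compressed_hamiltonian Hd ** cadjoint X"
        unfolding X_adj by (rule coherence_matrix_commute_hamiltonian[OF phase'])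
    qed
    show "Y ** compressed_lindblad \<alpha> = compressed_lindblad \<alpha> ** Y" if "\<alpha> < N" for \<alpha>
    proof (rule comm)
      show "X ** compressed_lindblad \<alpha> = compressed_lindblad \<alpha> ** X"
        unfolding X_def by (rule coherence_matrix_commute_lindblad[OF phase that])
      show "cadjoint X ** compressed_lindblad \<alpha> = compressed_lindblad \<alpha> ** cadjoint X"
        unfolding X_adj by (rule coherence_matrix_commute_lindblad[OF phase' that])
    qed
  qed
qed

end

section \<open>From a hidden enclosure to symmetry and resonance\<close>

locale enclosure_projector = perm_lindblad N \<sigma> D for N and \<sigma> :: "nat \<Rightarrow> 'n::finite \<Rightarrow> 'n" and D +
  fixes Hd :: "'n \<Rightarrow> real" and P :: "complex^'n^'n"
  assumes projector: "orth_projector P" and range: "mat_range P \<subseteq> mat_range (diag_proj B)"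
    and commute_hamiltonian: "mat_commute P (compressed_hamiltonian Hd)"
    and commute_lindblad: "\<forall>\<alpha><N. mat_commute P (compressed_lindblad \<alpha>)"
    and not_basin_sum: "\<not> (\<exists>S\<subseteq>basins N \<sigma> D. P = (\<Sum>C\<in>S. diag_proj C))"
begin

lemma P_hermitian: "cadjoint P = P"
  using projector by (simp add: orth_projector_def)

lemma P_cnj: "cnj (P $ a $ b) = P $ b $ a"
  by (rule hermitian_entry_cnj[OF P_hermitian])

lemma P_supported: "supported_in B P"
  by (rule supported_in_if_range[OF range P_hermitian])

lemma P_nonzero_basins: "P $ a $ b \<noteq> 0 \<Longrightarrow> a \<in> B \<and> b \<in> B"
  using P_supported by (simp add: supported_in_def)

lemma P_nonzero_sym: "P $ a $ b \<noteq> 0 \<Longrightarrow> P $ b $ a \<noteq> 0"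
  by (metis P_cnj complex_cnj_zero)

lemma P_lindblad_entry:
  assumes "\<alpha> < N"
  shows "(if b \<in> B \<and> \<sigma> \<alpha> b \<in> B then P $ a $ \<sigma> \<alpha> b * D \<alpha> b else 0)
       = (if a \<in> B \<and> inv (\<sigma> \<alpha>) a \<in> B then D \<alpha> (inv (\<sigma> \<alpha>) a) * P $ inv (\<sigma> \<alpha>) a $ b else 0)"
proof -
  have "P ** compressed_lindblad \<alpha> = compressed_lindblad \<alpha> ** P"
    using commute_lindblad assms by (simp add: mat_commute_def)
  then show ?thesis
    unfolding commute_compressed_lindblad_iff[OF sigma_permutes[OF assms]] by blast
qed

lemma P_sigma_entry:
  assumes "\<alpha> < N" "j \<in> B" "k \<in> B"
  shows "P $ \<sigma> \<alpha> j $ \<sigma> \<alpha> k * D \<alpha> k = D \<alpha> j * P $ j $ k"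
proof -
  have "(if k \<in> B \<and> \<sigma> \<alpha> k \<in> B then P $ \<sigma> \<alpha> j $ \<sigma> \<alpha> k * D \<alpha> k else 0)
      = (if \<sigma> \<alpha> j \<in> B \<and> j \<in> B then D \<alpha> j * P $ j $ k else 0)"
    using P_lindblad_entry[OF assms(1), of k "\<sigma> \<alpha> j"] assms(1) by simp
  moreover have "(if k \<in> B \<and> \<sigma> \<alpha> k \<in> B then P $ \<sigma> \<alpha> j $ \<sigma> \<alpha> k * D \<alpha> k else 0)
      = P $ \<sigma> \<alpha> j $ \<sigma> \<alpha> k * D \<alpha> k"
    using assms(3) P_nonzero_basins by auto
  moreover have "(if \<sigma> \<alpha> j \<in> B \<and> j \<in> B then D \<alpha> j * P $ j $ k else 0) = D \<alpha> j * P $ j $ k"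
    using assms(1,2) basin_union_step by auto
  ultimately show ?thesis
    by simp
qed

lemma P_hamiltonian:
  assumes "P $ a $ b \<noteq> 0"
  shows "Hd a = Hd b"
proof -
  have "\<forall>a b. (if b \<in> B then P $ a $ b * complex_of_real (Hd b) else 0)
      = (if a \<in> B then complex_of_real (Hd a) * P $ a $ b else 0)"
    using commute_hamiltonian unfolding mat_commute_def commute_compressed_diag_iff .
  then have "(if b \<in> B then P $ a $ b * complex_of_real (Hd b) else 0)
      = (if a \<in> B then complex_of_real (Hd a) * P $ a $ b else 0)"
    by blast
  then have "P $ a $ b * complex_of_real (Hd b) = complex_of_real (Hd a) * P $ a $ b"
    using P_nonzero_basins[OF assms] by simp
  then show ?thesis
    using assms by (simp add: mult.commute)
qed

lemma P_cmod_D: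
  assumes "P $ a $ b \<noteq> 0" "\<alpha> < N"
  shows "cmod (D \<alpha> a) = cmod (D \<alpha> b)"
proof -
  have B: "a \<in> B" "b \<in> B"
    using P_nonzero_basins[OF assms(1)] by auto
  let ?Q = "P $ \<sigma> \<alpha> a $ \<sigma> \<alpha> b"
  have e1: "?Q * D \<alpha> b = D \<alpha> a * P $ a $ b"
    by (rule P_sigma_entry[OF assms(2) B])
  have "cnj (P $ \<sigma> \<alpha> b $ \<sigma> \<alpha> a * D \<alpha> a) = cnj (D \<alpha> b * P $ b $ a)"
    using P_sigma_entry[OF assms(2) B(2,1)] by simp
  then have e2: "?Q * cnj (D \<alpha> a) = cnj (D \<alpha> b) * P $ a $ b"
    by (simp add: P_cnj)
  have "(D \<alpha> a * cnj (D \<alpha> a)) * P $ a $ b = cnj (D \<alpha> a) * (D \<alpha> a * P $ a $ b)"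
    by (simp add: mult_ac)
  also have "\<dots> = cnj (D \<alpha> a) * (?Q * D \<alpha> b)"
    by (simp only: e1)
  also have "\<dots> = D \<alpha> b * (?Q * cnj (D \<alpha> a))"
    by (simp only: mult_ac)
  also have "\<dots> = D \<alpha> b * (cnj (D \<alpha> b) * P $ a $ b)"
    by (simp only: e2)
  also have "\<dots> = (D \<alpha> b * cnj (D \<alpha> b)) * P $ a $ b"
    by (simp only: mult.assoc)
  finally have "(D \<alpha> a * cnj (D \<alpha> a)) * P $ a $ b = (D \<alpha> b * cnj (D \<alpha> b)) * P $ a $ b" .
  then have "D \<alpha> a * cnj (D \<alpha> a) = D \<alpha> b * cnj (D \<alpha> b)"
    using assms(1) by simp
  then have "complex_of_real ((cmod (D \<alpha> a))\<^sup>2) = complex_of_real ((cmod (D \<alpha> b))\<^sup>2)"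
    by (simp only: complex_norm_square)
  then have "(cmod (D \<alpha> a))\<^sup>2 = (cmod (D \<alpha> b))\<^sup>2"
    using of_real_eq_iff by blast
  then show ?thesis
    by (simp add: power2_eq_iff_nonneg)
qed

lemma P_step:
  assumes "P $ a $ b \<noteq> 0" "\<alpha> < N" "D \<alpha> a \<noteq> 0"
  shows "P $ \<sigma> \<alpha> a $ \<sigma> \<alpha> b = coh_weight D \<alpha> (a, b) * P $ a $ b"
proof -
  have Db: "D \<alpha> b \<noteq> 0"
    using P_cmod_D[OF assms(1,2)] assms(3) by auto
  have w: "coh_weight D \<alpha> (a, b) * D \<alpha> b = D \<alpha> a"
    by (rule coh_weight_mult[of D \<alpha> a b, OF P_cmod_D[OF assms(1,2)] Db])
  have "P $ \<sigma> \<alpha> a $ \<sigma> \<alpha> b * D \<alpha> b = D \<alpha> a * P $ a $ b"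
    using P_sigma_entry[OF assms(2)] P_nonzero_basins[OF assms(1)] by blast
  also have "\<dots> = (coh_weight D \<alpha> (a, b) * P $ a $ b) * D \<alpha> b"
    by (simp add: mult_ac flip: w)
  finally show ?thesis
    using Db by simp
qed

lemma P_step_nonzero_iff:
  assumes "\<alpha> < N" "a \<in> B" "b \<in> B" "D \<alpha> a \<noteq> 0" "D \<alpha> b \<noteq> 0"
  shows "P $ \<sigma> \<alpha> a $ \<sigma> \<alpha> b \<noteq> 0 \<longleftrightarrow> P $ a $ b \<noteq> 0"
  using P_sigma_entry[OF assms(1-3)] assms(4,5) by auto

lemma P_step_back:
  assumes "P $ \<sigma> \<alpha> j $ b \<noteq> 0" "j \<in> B" "D \<alpha> j \<noteq> 0" "\<alpha> < N"
  shows "has_active_pred \<alpha> b \<and> P $ j $ inv (\<sigma> \<alpha>) b \<noteq> 0"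
proof -
  have "P $ b $ \<sigma> \<alpha> j * D \<alpha> j
      = (if b \<in> B \<and> inv (\<sigma> \<alpha>) b \<in> B then D \<alpha> (inv (\<sigma> \<alpha>) b) * P $ inv (\<sigma> \<alpha>) b $ j else 0)"
    using P_lindblad_entry[OF assms(4), of j b] assms(2-4) basin_union_step by simp
  moreover have "P $ b $ \<sigma> \<alpha> j * D \<alpha> j \<noteq> 0"
    using P_nonzero_sym[OF assms(1)] assms(3) by simp
  ultimately have "inv (\<sigma> \<alpha>) b \<in> B" "D \<alpha> (inv (\<sigma> \<alpha>) b) \<noteq> 0" "P $ inv (\<sigma> \<alpha>) b $ j \<noteq> 0"
    by (simp_all split: if_splits)
  then show ?thesis
    using P_nonzero_sym by (simp add: has_active_pred_def)
qed

lemma P_not_diagonal: "\<not> is_diagonal P"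
proof
  assume diag: "is_diagonal P"
  define Q where "Q = {j. P $ j $ j = 1}"
  have P_eq: "P = diag_proj Q"
    unfolding Q_def by (rule diagonal_projector_eq[OF projector diag])
  have QB: "Q \<subseteq> B"
  proof
    fix x
    assume "x \<in> Q"
    then have "P $ x $ x \<noteq> 0"
      by (simp add: Q_def)
    then show "x \<in> B"
      using P_nonzero_basins by blast
  qed
  have "y \<in> Q" if jQ: "j \<in> Q" and jy: "E j y" for j y
  proof -
    obtain \<alpha> where \<alpha>: "\<alpha> < N" "\<sigma> \<alpha> j = y" "D \<alpha> j \<noteq> 0"
      using jy omega_edge_iff by blast
    have "j \<in> B"
      using jQ QB by blast
    then have "P $ y $ y * D \<alpha> j = D \<alpha> j * P $ j $ j"
      using P_sigma_entry[of \<alpha> j j] \<alpha>(1,2) by simp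
    then show ?thesis
      using jQ \<alpha>(3) by (simp add: Q_def)
  qed
  then have "diag_proj Q = (\<Sum>C\<in>{C \<in> basins N \<sigma> D. C \<subseteq> Q}. diag_proj C)"
    by (rule diag_proj_eq_sum_basins[OF QB])
  with P_eq have "P = (\<Sum>C\<in>{C \<in> basins N \<sigma> D. C \<subseteq> Q}. diag_proj C)"
    by (rule trans)
  then have "\<exists>S\<subseteq>basins N \<sigma> D. P = (\<Sum>C\<in>S. diag_proj C)"
    by (intro exI[of _ "{C \<in> basins N \<sigma> D. C \<subseteq> Q}"] conjI) auto
  with not_basin_sum show False
    by contradiction
qed
end

locale enclosure_coherence = enclosure_projector N \<sigma> D Hd P
  for N and \<sigma> :: "nat \<Rightarrow> 'n::finite \<Rightarrow> 'n" and D Hd P +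
  fixes j0 k0 :: 'n
  assumes j0_k0: "j0 \<noteq> k0" "P $ j0 $ k0 \<noteq> 0"
begin

abbreviation support_rel :: "('n \<times> 'n) set" where
  "support_rel \<equiv> {(a, b). P $ a $ b \<noteq> 0}"

text \<open>The component of \<open>(j\<^sub>0, k\<^sub>0)\<close> is taken in the coherence graph of the support of \<open>P\<close>, whose
  vertices are the nonzero off-diagonal entries; this avoids defining the relation \<open>coh_rel\<close> and
  its component simultaneously, and it turns out to be a component for \<open>coh_rel\<close> as well.\<close>
definition coh_comp :: "('n \<times> 'n) set" where
  "coh_comp = {y. (coh_adj N \<sigma> D support_rel)\<^sup>*\<^sup>* (j0, k0) y}"

definition coh_rel :: "('n \<times> 'n) set" where
  "coh_rel = (coh_comp \<union> coh_comp\<inverse>)\<^sup>+"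

definition coh_points :: "'n set" where
  "coh_points = fst ` coh_comp \<union> snd ` coh_comp"

lemma coh_comp_closed: "x \<in> coh_comp \<Longrightarrow> coh_adj N \<sigma> D support_rel x y \<Longrightarrow> y \<in> coh_comp"
  unfolding coh_comp_def by (simp add: rtranclp.rtrancl_into_rtrancl)

lemma coh_comp_vertices:
  assumes "x \<in> coh_comp"
  shows "x \<in> coh_vertices support_rel"
proof -
  have "(coh_adj N \<sigma> D support_rel)\<^sup>*\<^sup>* (j0, k0) x"
    using assms by (simp add: coh_comp_def)
  then show ?thesis
    by (induction rule: rtranclp_induct)
      (use j0_k0 in \<open>auto simp: coh_vertices_def coh_adj_def coh_edge_def\<close>)
qed

lemma coh_comp_nonzero: "(a, b) \<in> coh_comp \<Longrightarrow> P $ a $ b \<noteq> 0 \<and> a \<noteq> b"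
  using coh_comp_vertices by (auto simp: coh_vertices_def)

lemma coh_comp_forward:
  assumes ab: "(a, b) \<in> coh_comp" and \<alpha>: "\<alpha> < N" and active: "D \<alpha> a \<noteq> 0 \<or> D \<alpha> b \<noteq> 0"
  shows "D \<alpha> a \<noteq> 0 \<and> D \<alpha> b \<noteq> 0 \<and> (\<sigma> \<alpha> a, \<sigma> \<alpha> b) \<in> coh_comp"
proof -
  have P: "P $ a $ b \<noteq> 0" "a \<noteq> b"
    using coh_comp_nonzero[OF ab] by auto
  then have D: "D \<alpha> a \<noteq> 0" "D \<alpha> b \<noteq> 0"
    using P_cmod_D[OF P(1) \<alpha>] active by auto
  then have "P $ \<sigma> \<alpha> a $ \<sigma> \<alpha> b \<noteq> 0"
    using P_step_nonzero_iff[OF \<alpha>] P_nonzero_basins[OF P(1)] P(1) by blast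
  then have "coh_edge N \<sigma> D support_rel (a, b) \<alpha> (\<sigma> \<alpha> a, \<sigma> \<alpha> b)"
    using P D \<alpha> by (simp add: coh_edge_def coh_vertices_def)
  then show ?thesis
    using D coh_comp_closed[OF ab] by (auto simp: coh_adj_def)
qed

lemma coh_comp_backward:
  assumes ab: "(a, b) \<in> coh_comp" and \<alpha>: "\<alpha> < N"
    and active: "has_active_pred \<alpha> a \<or> has_active_pred \<alpha> b"
  shows "has_active_pred \<alpha> a \<and> has_active_pred \<alpha> b \<and> (inv (\<sigma> \<alpha>) a, inv (\<sigma> \<alpha>) b) \<in> coh_comp"
proof -
  let ?p = "inv (\<sigma> \<alpha>)"
  have P: "P $ a $ b \<noteq> 0" "a \<noteq> b"
    using coh_comp_nonzero[OF ab] by auto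
  have pred: "has_active_pred \<alpha> a \<and> has_active_pred \<alpha> b \<and> P $ ?p a $ ?p b \<noteq> 0"
    using active
  proof
    assume a_pred: "has_active_pred \<alpha> a"
    then have "P $ \<sigma> \<alpha> (?p a) $ b \<noteq> 0"
      using P(1) \<alpha> by simp
    then have "has_active_pred \<alpha> b \<and> P $ ?p a $ ?p b \<noteq> 0"
      using P_step_back a_pred \<alpha> unfolding has_active_pred_def by blast
    with a_pred show ?thesis
      by blast
  next
    assume b_pred: "has_active_pred \<alpha> b"
    then have "P $ \<sigma> \<alpha> (?p b) $ a \<noteq> 0"
      using P_nonzero_sym[OF P(1)] \<alpha> by simp
    then have "has_active_pred \<alpha> a \<and> P $ ?p b $ ?p a \<noteq> 0"
      using P_step_back b_pred \<alpha> unfolding has_active_pred_def by blast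
    with b_pred show ?thesis
      using P_nonzero_sym by blast
  qed
  have "?p a \<noteq> ?p b"
    using P(2) \<alpha> by (metis sigma_inv_sigma)
  then have "coh_edge N \<sigma> D support_rel (?p a, ?p b) \<alpha> (a, b)"
    using P pred \<alpha> by (auto simp: coh_edge_def coh_vertices_def has_active_pred_def)
  then show ?thesis
    using pred coh_comp_closed[OF ab] by (auto simp: coh_adj_def)
qed

lemma coh_comp_sym_nonzero: "(a, b) \<in> coh_comp \<union> coh_comp\<inverse> \<Longrightarrow> P $ a $ b \<noteq> 0"
  using coh_comp_nonzero P_nonzero_sym by blast

lemma coh_rel_forward:
  assumes "(a, b) \<in> coh_rel" "\<alpha> < N" "D \<alpha> a \<noteq> 0"
  shows "D \<alpha> b \<noteq> 0 \<and> (\<sigma> \<alpha> a, \<sigma> \<alpha> b) \<in> coh_rel"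
proof -
  have "D \<alpha> b \<noteq> 0 \<and> (\<sigma> \<alpha> a, \<sigma> \<alpha> b) \<in> coh_comp \<union> coh_comp\<inverse>"
    if "(a, b) \<in> coh_comp \<union> coh_comp\<inverse>" "D \<alpha> a \<noteq> 0" for a b
    using that coh_comp_forward[OF _ assms(2)] by blast
  from trancl_transport[where Q = "\<lambda>x. D \<alpha> x \<noteq> 0" and f = "\<sigma> \<alpha>", OF this] assms(1,3)
  show ?thesis
    unfolding coh_rel_def by blast
qed

lemma coh_rel_backward:
  assumes "(a, b) \<in> coh_rel" "\<alpha> < N" "has_active_pred \<alpha> a"
  shows "has_active_pred \<alpha> b \<and> (inv (\<sigma> \<alpha>) a, inv (\<sigma> \<alpha>) b) \<in> coh_rel"
proof -
  have "has_active_pred \<alpha> b \<and> (inv (\<sigma> \<alpha>) a, inv (\<sigma> \<alpha>) b) \<in> coh_comp \<union> coh_comp\<inverse>"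
    if "(a, b) \<in> coh_comp \<union> coh_comp\<inverse>" "has_active_pred \<alpha> a" for a b
    using that coh_comp_backward[OF _ assms(2)] by blast
  from trancl_transport[where Q = "has_active_pred \<alpha>" and f = "inv (\<sigma> \<alpha>)", OF this] assms(1,3)
  show ?thesis
    unfolding coh_rel_def by blast
qed

lemma coh_rel_backward_iter:
  assumes "(a, b) \<in> coh_rel" "\<alpha> < N" "\<forall>i<t. has_active_pred \<alpha> ((inv (\<sigma> \<alpha>) ^^ i) a)"
  shows "(\<forall>i<t. has_active_pred \<alpha> ((inv (\<sigma> \<alpha>) ^^ i) b))
    \<and> ((inv (\<sigma> \<alpha>) ^^ t) a, (inv (\<sigma> \<alpha>) ^^ t) b) \<in> coh_rel"
  using assms(3)
proof (induction t)
  case 0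
  then show ?case
    using assms(1) by simp
next
  case (Suc t)
  let ?p = "inv (\<sigma> \<alpha>)"
  have IH: "\<forall>i<t. has_active_pred \<alpha> ((?p ^^ i) b)" "((?p ^^ t) a, (?p ^^ t) b) \<in> coh_rel"
    using Suc by auto
  have "has_active_pred \<alpha> ((?p ^^ t) a)"
    using Suc.prems by simp
  then have "has_active_pred \<alpha> ((?p ^^ t) b) \<and> (?p ((?p ^^ t) a), ?p ((?p ^^ t) b)) \<in> coh_rel"
    using coh_rel_backward[OF IH(2) assms(2)] by blast
  then show ?case
    using IH(1) less_Suc_eq by auto
qed

lemma coh_rel_invariant:
  assumes "(a, b) \<in> coh_rel"
  shows "a \<in> B \<and> b \<in> B \<and> Hd a = Hd b \<and> (\<forall>\<alpha><N. cmod (D \<alpha> a) = cmod (D \<alpha> b))"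
proof -
  let ?G = "{(a, b). a \<in> B \<and> b \<in> B \<and> Hd a = Hd b \<and> (\<forall>\<alpha><N. cmod (D \<alpha> a) = cmod (D \<alpha> b))}"
  have "coh_comp \<union> coh_comp\<inverse> \<subseteq> ?G"
  proof
    fix x
    assume "x \<in> coh_comp \<union> coh_comp\<inverse>"
    then obtain a b where "x = (a, b)" "P $ a $ b \<noteq> 0"
      using coh_comp_sym_nonzero by (cases x) blast
    then show "x \<in> ?G"
      using P_nonzero_basins P_hamiltonian P_cmod_D by simp
  qed
  then have "coh_rel \<subseteq> ?G\<^sup>+"
    unfolding coh_rel_def using trancl_mono by blast
  moreover have "trans ?G"
    unfolding trans_def by simp
  then have "?G\<^sup>+ = ?G"
    by (rule trancl_id)
  ultimately show ?thesis
    using assms by blast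
qed

lemma coh_rel_sym: "sym coh_rel"
  unfolding coh_rel_def by (rule sym_trancl) (auto simp: sym_def)

lemma coh_rel_trans: "trans coh_rel"
  unfolding coh_rel_def by (rule trans_trancl)

lemma coh_comp_subset_coh_rel: "coh_comp \<subseteq> coh_rel"
  unfolding coh_rel_def by auto

lemma coh_rel_field: "(a, b) \<in> coh_rel \<Longrightarrow> a \<in> coh_points \<and> b \<in> coh_points"
  unfolding coh_rel_def by (induction rule: trancl_induct) (force simp: coh_points_def)+

lemma coh_rel_refl:
  assumes "a \<in> coh_points"
  shows "(a, a) \<in> coh_rel"
proof -
  obtain b where "(a, b) \<in> coh_comp \<or> (b, a) \<in> coh_comp"
    using assms unfolding coh_points_def by force
  then have "(a, b) \<in> coh_rel" "(b, a) \<in> coh_rel"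
    using coh_comp_subset_coh_rel coh_rel_sym by (auto dest: symD)
  then show ?thesis
    using coh_rel_trans by (blast dest: transD)
qed

lemma equiv_coh_rel: "equiv coh_points coh_rel"
  using coh_rel_field coh_rel_refl coh_rel_sym coh_rel_trans
  by (auto simp: equiv_def refl_on_def)

lemma coh_points_basins: "coh_points \<subseteq> B"
  using coh_rel_refl coh_rel_invariant by blast

lemma coh_rel_class_image:
  assumes "a \<in> coh_points" "\<alpha> < N" "D \<alpha> a \<noteq> 0"
  shows "\<sigma> \<alpha> ` (coh_rel `` {a}) = coh_rel `` {\<sigma> \<alpha> a}"
proof
  show "\<sigma> \<alpha> ` (coh_rel `` {a}) \<subseteq> coh_rel `` {\<sigma> \<alpha> a}"
    using coh_rel_forward assms(2,3) by blast
  show "coh_rel `` {\<sigma> \<alpha> a} \<subseteq> \<sigma> \<alpha> ` (coh_rel `` {a})"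
  proof
    fix y
    assume "y \<in> coh_rel `` {\<sigma> \<alpha> a}"
    moreover have "has_active_pred \<alpha> (\<sigma> \<alpha> a)"
      using assms coh_points_basins by (auto simp: has_active_pred_def)
    ultimately have "(a, inv (\<sigma> \<alpha>) y) \<in> coh_rel"
      using coh_rel_backward assms(2) by fastforce
    then show "y \<in> \<sigma> \<alpha> ` (coh_rel `` {a})"
      using assms(2) by (auto intro: image_eqI[where x = "inv (\<sigma> \<alpha>) y"])
  qed
qed

lemma coh_rel_class_card_step:
  assumes "a \<in> coh_points" "\<alpha> < N" "D \<alpha> a \<noteq> 0"
  shows "card (coh_rel `` {\<sigma> \<alpha> a}) = card (coh_rel `` {a})"
proof -
  have "inj_on (\<sigma> \<alpha>) (coh_rel `` {a})"
    using assms(2) by (simp add: inj_on_def)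
  then show ?thesis
    using coh_rel_class_image[OF assms] card_image by metis
qed

lemma coh_rel_class_card:
  assumes "a \<in> coh_points"
  shows "card (coh_rel `` {a}) = card (coh_rel `` {j0})"
proof -
  have "card (coh_rel `` {fst x}) = card (coh_rel `` {j0})" if "x \<in> coh_comp" for x
  proof -
    have "(coh_adj N \<sigma> D support_rel)\<^sup>*\<^sup>* (j0, k0) x"
      using that by (simp add: coh_comp_def)
    then show ?thesis
    proof (induction rule: rtranclp_induct)
      case (step y z)
      have "y \<in> coh_comp" "z \<in> coh_comp"
        using step.hyps coh_comp_closed by (auto simp: coh_comp_def)
      then have "fst y \<in> coh_points" "fst z \<in> coh_points"
        by (auto simp: coh_points_def)
      moreover obtain \<alpha> where "coh_edge N \<sigma> D support_rel y \<alpha> z \<or> coh_edge N \<sigma> D support_rel z \<alpha> y"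
        using step.hyps(2) by (auto simp: coh_adj_def)
      then consider "\<alpha> < N" "\<sigma> \<alpha> (fst y) = fst z" "D \<alpha> (fst y) \<noteq> 0"
        | "\<alpha> < N" "\<sigma> \<alpha> (fst z) = fst y" "D \<alpha> (fst z) \<noteq> 0"
        by (auto simp: coh_edge_def)
      ultimately have "card (coh_rel `` {fst z}) = card (coh_rel `` {fst y})"
        by cases (metis coh_rel_class_card_step)+
      then show ?case
        using step.IH by simp
    qed simp
  qed
  moreover obtain x where "x \<in> coh_comp" "a = fst x \<or> a = snd x"
    using assms by (auto simp: coh_points_def)
  moreover have "coh_rel `` {fst x} = coh_rel `` {snd x}" if "x \<in> coh_comp" for x
    using coh_comp_subset_coh_rel that equiv_class_eq[OF equiv_coh_rel] by (cases x) auto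
  ultimately show ?thesis
    by metis
qed

lemma uniform_coh_rel: "uniform_equiv coh_points coh_rel (card (coh_rel `` {j0}))"
  unfolding uniform_equiv_def using equiv_coh_rel coh_rel_class_card by (auto elim: quotientE)

lemma coh_rel_class_card_ge_2: "card (coh_rel `` {j0}) \<ge> 2"
proof -
  have "(j0, k0) \<in> coh_rel"
    using coh_comp_subset_coh_rel by (auto simp: coh_comp_def)
  then have "{j0, k0} \<subseteq> coh_rel `` {j0}"
    using coh_rel_refl coh_rel_field by blast
  then have "card {j0, k0} \<le> card (coh_rel `` {j0})"
    by (rule card_mono[rotated]) simp
  then show ?thesis
    using j0_k0(1) by simp
qed

text \<open>For an inactive \<open>j\<close> both \<open>j\<close> and its partner \<open>k\<close> reach their successors by the same number of
  backward steps along active predecessors, which the backward transport of \<open>coh_rel\<close> preserves.\<close>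
lemma coh_rel_sigma_inactive:
  assumes jk: "(j, k) \<in> coh_rel" and \<alpha>: "\<alpha> < N" and j: "D \<alpha> j = 0"
    and sj: "\<sigma> \<alpha> j \<in> B" and sk: "\<sigma> \<alpha> k \<in> B"
  shows "(\<sigma> \<alpha> j, \<sigma> \<alpha> k) \<in> coh_rel"
proof -
  let ?p = "inv (\<sigma> \<alpha>)"
  have "cmod (D \<alpha> j) = cmod (D \<alpha> k)"
    using coh_rel_invariant[OF jk] \<alpha> by blast
  then have k: "D \<alpha> k = 0"
    using j by simp
  obtain t where t: "\<forall>i<t. has_active_pred \<alpha> ((?p ^^ i) j)"
    "\<not> has_active_pred \<alpha> ((?p ^^ t) j)" "(?p ^^ t) j = \<sigma> \<alpha> j"
    using inactive_backward_orbit[OF \<alpha> j sj] by blast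
  obtain t' where t': "\<forall>i<t'. has_active_pred \<alpha> ((?p ^^ i) k)"
    "\<not> has_active_pred \<alpha> ((?p ^^ t') k)" "(?p ^^ t') k = \<sigma> \<alpha> k"
    using inactive_backward_orbit[OF \<alpha> k sk] by blast
  have kj: "(k, j) \<in> coh_rel"
    using jk coh_rel_sym by (auto dest: symD)
  have "\<not> t' < t"
    using coh_rel_backward_iter[OF jk \<alpha> t(1)] t'(2) by blast
  moreover have "\<not> t < t'"
    using coh_rel_backward_iter[OF kj \<alpha> t'(1)] t(2) by blast
  ultimately have "t = t'"
    by simp
  then show ?thesis
    using coh_rel_backward_iter[OF jk \<alpha> t(1)] t(3) t'(3) by simp
qed

lemma coh_rel_sigma:
  assumes "(j, k) \<in> coh_rel" "\<alpha> < N" "\<sigma> \<alpha> j \<in> B" "\<sigma> \<alpha> k \<in> B"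
  shows "(\<sigma> \<alpha> j, \<sigma> \<alpha> k) \<in> coh_rel"
  using coh_rel_forward[OF assms(1,2)] coh_rel_sigma_inactive[OF assms(1,2) _ assms(3,4)] by blast

lemma lindblad_symmetry_coh_rel:
  "lindblad_symmetry N \<sigma> D Hd coh_points coh_rel (card (coh_rel `` {j0}))"
proof unfold_locales
  show "coh_points \<subseteq> B"
    by (rule coh_points_basins)
  show "uniform_equiv coh_points coh_rel (card (coh_rel `` {j0}))"
    by (rule uniform_coh_rel)
  show "card (coh_rel `` {j0}) \<ge> 2"
    by (rule coh_rel_class_card_ge_2)
  show "\<forall>(j, k)\<in>coh_rel. Hd j = Hd k"
    using coh_rel_invariant by blast
  show "\<forall>\<alpha><N. \<forall>(j, k)\<in>coh_rel. cmod (D \<alpha> j) = cmod (D \<alpha> k)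
      \<and> (\<sigma> \<alpha> j \<in> B \<and> \<sigma> \<alpha> k \<in> B \<longrightarrow> (\<sigma> \<alpha> j, \<sigma> \<alpha> k) \<in> coh_rel)"
    using coh_rel_invariant coh_rel_sigma by blast
qed

lemma coh_comp_coh_rel_vertices: "x \<in> coh_comp \<Longrightarrow> x \<in> coh_vertices coh_rel"
  using coh_comp_subset_coh_rel coh_comp_nonzero by (cases x) (auto simp: coh_vertices_def)

lemma coh_rel_edge_support_iff:
  assumes "coh_edge N \<sigma> D coh_rel x \<alpha> y"
  shows "x \<in> coh_vertices support_rel \<longleftrightarrow> y \<in> coh_vertices support_rel"
proof -
  obtain a b where x: "x = (a, b)"
    by fastforce
  have "(a, b) \<in> coh_rel" "\<alpha> < N" "D \<alpha> a \<noteq> 0" "D \<alpha> b \<noteq> 0" "y = (\<sigma> \<alpha> a, \<sigma> \<alpha> b)"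
    "a \<noteq> b" "\<sigma> \<alpha> a \<noteq> \<sigma> \<alpha> b"
    using assms by (auto simp: x coh_edge_def coh_vertices_def)
  then show ?thesis
    using P_step_nonzero_iff coh_rel_invariant by (auto simp: x coh_vertices_def)
qed

lemma coh_adj_coh_rel_iff:
  assumes x: "x \<in> coh_comp"
  shows "coh_adj N \<sigma> D coh_rel x y \<longleftrightarrow> coh_adj N \<sigma> D support_rel x y"
proof
  assume "coh_adj N \<sigma> D coh_rel x y"
  then obtain \<alpha> where "coh_edge N \<sigma> D coh_rel x \<alpha> y \<or> coh_edge N \<sigma> D coh_rel y \<alpha> x"
    by (auto simp: coh_adj_def)
  moreover have "x \<in> coh_vertices support_rel"
    by (rule coh_comp_vertices[OF x])
  ultimately show "coh_adj N \<sigma> D support_rel x y"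
    using coh_rel_edge_support_iff coh_edge_change_rel unfolding coh_adj_def by metis
next
  assume adj: "coh_adj N \<sigma> D support_rel x y"
  then have "y \<in> coh_comp"
    by (rule coh_comp_closed[OF x])
  then show "coh_adj N \<sigma> D coh_rel x y"
    using adj coh_comp_coh_rel_vertices x coh_edge_change_rel unfolding coh_adj_def by metis
qed

lemma coh_component_coh_comp: "coh_component N \<sigma> D coh_rel coh_comp"
  unfolding coh_component_def
proof (intro bexI)
  show "(j0, k0) \<in> coh_vertices coh_rel"
    by (rule coh_comp_coh_rel_vertices) (simp add: coh_comp_def)
  have "y \<in> coh_comp" if "(coh_adj N \<sigma> D coh_rel)\<^sup>*\<^sup>* (j0, k0) y" for y
    using that
  proof (induction rule: rtranclp_induct)
    case (step y z)
    then show ?case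
      using coh_adj_coh_rel_iff coh_comp_closed by blast
  qed (simp add: coh_comp_def)
  moreover have "(coh_adj N \<sigma> D coh_rel)\<^sup>*\<^sup>* (j0, k0) y" if "y \<in> coh_comp" for y
  proof -
    have "(coh_adj N \<sigma> D support_rel)\<^sup>*\<^sup>* (j0, k0) y"
      using that by (simp add: coh_comp_def)
    then show ?thesis
    proof (induction rule: rtranclp_induct)
      case (step y z)
      then have "y \<in> coh_comp"
        by (simp add: coh_comp_def)
      then show ?case
        using step coh_adj_coh_rel_iff by (meson rtranclp.rtrancl_into_rtrancl)
    qed simp
  qed
  ultimately show "coh_comp = {y. (coh_adj N \<sigma> D coh_rel)\<^sup>*\<^sup>* (j0, k0) y}"
    by blast
qed

lemma coh_edge_entry:
  assumes "P $ fst x $ snd x \<noteq> 0" "coh_edge N \<sigma> D R x \<alpha> y"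
  shows "P $ fst y $ snd y = coh_weight D \<alpha> x * P $ fst x $ snd x"
    and "cmod (coh_weight D \<alpha> x) = 1"
proof -
  have e: "\<alpha> < N" "D \<alpha> (fst x) \<noteq> 0" "D \<alpha> (snd x) \<noteq> 0"
    "fst y = \<sigma> \<alpha> (fst x)" "snd y = \<sigma> \<alpha> (snd x)"
    using assms(2) by (auto simp: coh_edge_def)
  show "P $ fst y $ snd y = coh_weight D \<alpha> x * P $ fst x $ snd x"
    using P_step[OF assms(1) e(1,2)] e(4,5) by simp
  show "cmod (coh_weight D \<alpha> x) = 1"
    using coh_weight_norm[of D \<alpha> "fst x" "snd x", OF e(2,3)] by simp
qed

lemma coh_comp_entry_nonzero: "x \<in> coh_comp \<Longrightarrow> P $ fst x $ snd x \<noteq> 0"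
  using coh_comp_nonzero[of "fst x" "snd x"] by simp

lemma coh_comp_entry_norm:
  assumes "x \<in> coh_comp"
  shows "cmod (P $ fst x $ snd x) = cmod (P $ j0 $ k0)"
proof -
  have "(coh_adj N \<sigma> D support_rel)\<^sup>*\<^sup>* (j0, k0) x"
    using assms by (simp add: coh_comp_def)
  then show ?thesis
  proof (induction rule: rtranclp_induct)
    case (step y z)
    then have "y \<in> coh_comp" "z \<in> coh_comp"
      using coh_comp_closed by (auto simp: coh_comp_def)
    then have nonzero: "P $ fst y $ snd y \<noteq> 0" "P $ fst z $ snd z \<noteq> 0"
      by (simp_all add: coh_comp_entry_nonzero)
    obtain \<alpha> where "coh_edge N \<sigma> D support_rel y \<alpha> z \<or> coh_edge N \<sigma> D support_rel z \<alpha> y"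
      using step.hyps(2) by (auto simp: coh_adj_def)
    then have "cmod (P $ fst z $ snd z) = cmod (P $ fst y $ snd y)"
    proof
      assume "coh_edge N \<sigma> D support_rel y \<alpha> z"
      then show ?thesis
        using coh_edge_entry[OF nonzero(1)] by (simp add: norm_mult)
    next
      assume "coh_edge N \<sigma> D support_rel z \<alpha> y"
      then show ?thesis
        using coh_edge_entry[OF nonzero(2)] by (simp add: norm_mult)
    qed
    then show ?case
      using step.IH by simp
  qed simp
qed

lemma resonant_coh_comp: "resonant N \<sigma> D coh_rel coh_comp"
  unfolding resonant_def
proof (intro exI[of _ "\<lambda>x y. P $ fst y $ snd y / P $ fst x $ snd x"] conjI ballI allI impI)
  fix x y
  assume "x \<in> coh_comp" "y \<in> coh_comp"
  then show "cmod (P $ fst y $ snd y / P $ fst x $ snd x) = 1"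
    using coh_comp_entry_norm j0_k0(2) by (simp add: norm_divide)
next
  fix x y z
  assume "x \<in> coh_comp" "y \<in> coh_comp" "z \<in> coh_comp"
  then show "P $ fst y $ snd y / P $ fst x $ snd x * (P $ fst z $ snd z / P $ fst y $ snd y)
      = P $ fst z $ snd z / P $ fst x $ snd x"
    using coh_comp_entry_nonzero by simp
next
  fix x y \<alpha>
  assume "x \<in> coh_comp" "y \<in> coh_comp" "coh_edge N \<sigma> D coh_rel x \<alpha> y"
  moreover from this have "P $ fst x $ snd x \<noteq> 0"
    by (simp add: coh_comp_entry_nonzero)
  ultimately show "P $ fst y $ snd y / P $ fst x $ snd x = coh_weight D \<alpha> x"
    using coh_edge_entry(1) by simp
qed

lemma resonant_symmetry:
  "\<exists>Ns R \<nu> C. lindblad_symmetry N \<sigma> D Hd Ns R \<nu> \<and> coh_component N \<sigma> D R C \<and> resonant N \<sigma> D R C"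
  using lindblad_symmetry_coh_rel coh_component_coh_comp resonant_coh_comp by blast

end

context perm_lindblad
begin

lemma resonant_symmetry_if_hidden_enclosure:
  assumes "has_hidden_enclosure N \<sigma> D Hd"
  shows "\<exists>Ns R \<nu> C. lindblad_symmetry N \<sigma> D Hd Ns R \<nu> \<and> coh_component N \<sigma> D R C
    \<and> resonant N \<sigma> D R C"
proof -
  obtain P where "enclosure_projector N \<sigma> D Hd P"
    using assms unfolding has_hidden_enclosure_def Let_def basin_proj_eq
    by (auto intro!: enclosure_projector.intro perm_lindblad_axioms enclosure_projector_axioms.intro)
  then interpret enclosure_projector N \<sigma> D Hd P .
  obtain j0 k0 where "j0 \<noteq> k0" "P $ j0 $ k0 \<noteq> 0"
    using P_not_diagonal by (auto simp: is_diagonal_def)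
  then interpret enclosure_coherence N \<sigma> D Hd P j0 k0
    by unfold_locales
  show ?thesis
    by (rule resonant_symmetry)
qed

end

theorem mainTheorem7:
  fixes Hd :: "'n::finite \<Rightarrow> real"
    and N :: nat
    and \<sigma> :: "nat \<Rightarrow> 'n \<Rightarrow> 'n"
    and D :: "nat \<Rightarrow> 'n \<Rightarrow> complex"
  assumes perm: "\<forall>\<alpha><N. \<sigma> \<alpha> permutes UNIV"
    and cyc: "\<forall>\<alpha><N. \<forall>j k. D \<alpha> j = 0 \<and> D \<alpha> k = 0 \<and> (\<exists>m. (\<sigma> \<alpha> ^^ m) j = k) \<longrightarrow> j = k"
  shows "has_hidden_enclosure N \<sigma> D Hd \<longleftrightarrow>
    (\<exists>Ns R \<nu>. Ns \<subseteq> basin_union N \<sigma> D \<and> uniform_equiv Ns R \<nu> \<and> \<nu> \<ge> 2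
       \<and> (\<forall>(j, k)\<in>R. Hd j = Hd k)
       \<and> (\<forall>\<alpha><N. \<forall>(j, k)\<in>R. cmod (D \<alpha> j) = cmod (D \<alpha> k)
            \<and> (\<sigma> \<alpha> j \<in> basin_union N \<sigma> D \<and> \<sigma> \<alpha> k \<in> basin_union N \<sigma> D
                 \<longrightarrow> (\<sigma> \<alpha> j, \<sigma> \<alpha> k) \<in> R))
       \<and> (\<exists>C. coh_component N \<sigma> D R C \<and> resonant N \<sigma> D R C))"
proof -
  interpret perm_lindblad N \<sigma> D
    using perm cyc by unfold_locales
  have "has_hidden_enclosure N \<sigma> D Hd \<longleftrightarrow> (\<exists>Ns R \<nu> C. lindblad_symmetry N \<sigma> D Hd Ns R \<nu>
      \<and> coh_component N \<sigma> D R C \<and> resonant N \<sigma> D R C)"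
    using resonant_symmetry_if_hidden_enclosure
      lindblad_symmetry.hidden_enclosure_if_resonant_component by blast
  then show ?thesis
    unfolding lindblad_symmetry_def lindblad_symmetry_axioms_def
    using perm_lindblad_axioms by blast
qed

end
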